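(* Let $\rho_{AB}$ be a density matrix on $\mathcal H_A\otimes\mathcal H_B$, let $\Phi:\mathbf L(\mathcal H_A)\to\mathbf L(\mathcal H_{A'})$ and $\Psi:\mathbf L(\mathcal H_B)\to\mathbf L(\mathcal H_{B'})$ be completely positive trace-preserving maps, and let $\sigma_{A'B'}=(\Phi\otimes\Psi)(\rho_{AB})$. Then $\mu_{\mathrm{ent}}(\rho_{AB})\geq\mu_{\mathrm{ent}}(\sigma_{A'B'})$.
   Context: All Hilbert spaces are finite-dimensional. For a bipartite density matrix $\rho_{AB}$ with reduced states $\rho_A,\rho_B$, the maximal correlation is $\mu(\rho_{AB})=\max |\mathrm{tr}(\rho_{AB}\, X_A\otimes Y_B^\dagger)|$ over $X_A\in\mathbf L(\mathcal H_A)$, $Y_B\in\mathbf L(\mathcal H_B)$ with $\mathrm{tr}(\rho_A X_A)=\mathrm{tr}(\rho_B Y_B)=0$ and $\mathrm{tr}(\rho_A X_AX_A^\dagger)=\mathrm{tr}(\rho_B Y_BY_B^\dagger)=1$. The maximal entanglement is $\mu_{\mathrm{ent}}(\rho_{AB})=\inf \max_i \mu(\tau^{(i)}_{AB})$, the infimum over all decompositions $\rho_{AB}=\sum_i p_i\tau^{(i)}_{AB}$ with $p_i\ge0$ and $\tau^{(i)}_{AB}$ density matrices on $\mathcal H_A\otimes\mathcal H_B$. *)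

theory Defs
  imports "Jordan_Normal_Form.Matrix"
begin

text \<open>Finite-dimensional Hilbert spaces are modelled as C^d; operators on them as
  complex d x d matrices (JNF type complex mat). The bipartite space H_A (x) H_B
  with dim H_A = dA, dim H_B = dB is C^(dA*dB) with the product basis ordered
  lexicographically: index (i,k) corresponds to i*dB + k.\<close>

definition mtrace :: "complex mat \<Rightarrow> complex" where
  "mtrace M = (\<Sum>i<dim_row M. M $$ (i, i))"

definition dagger :: "complex mat \<Rightarrow> complex mat" where
  "dagger M = mat (dim_col M) (dim_row M) (\<lambda>(i, j). cnj (M $$ (j, i)))"

definition kron :: "complex mat \<Rightarrow> complex mat \<Rightarrow> complex mat" where
  "kron A B = mat (dim_row A * dim_row B) (dim_col A * dim_col B)
     (\<lambda>(r, c). A $$ (r div dim_row B, c div dim_col B) * B $$ (r mod dim_row B, c mod dim_col B))"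

definition psd :: "nat \<Rightarrow> complex mat \<Rightarrow> bool" where
  "psd n M \<longleftrightarrow> M \<in> carrier_mat n n \<and>
     (\<forall>v :: nat \<Rightarrow> complex.
        let q = (\<Sum>i<n. \<Sum>j<n. cnj (v i) * M $$ (i, j) * v j) in Im q = 0 \<and> Re q \<ge> 0)"

definition density :: "nat \<Rightarrow> complex mat \<Rightarrow> bool" where
  "density n M \<longleftrightarrow> psd n M \<and> mtrace M = 1"

definition ptrace_B :: "nat \<Rightarrow> nat \<Rightarrow> complex mat \<Rightarrow> complex mat" where
  "ptrace_B dA dB M = mat dA dA (\<lambda>(i, j). \<Sum>k<dB. M $$ (i * dB + k, j * dB + k))"

definition ptrace_A :: "nat \<Rightarrow> nat \<Rightarrow> complex mat \<Rightarrow> complex mat" where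
  "ptrace_A dA dB M = mat dB dB (\<lambda>(k, l). \<Sum>i<dA. M $$ (i * dB + k, i * dB + l))"

definition munit :: "nat \<Rightarrow> nat \<Rightarrow> nat \<Rightarrow> complex mat" where
  "munit d i j = mat d d (\<lambda>(a, b). if a = i \<and> b = j then 1 else 0)"

definition lin_map :: "nat \<Rightarrow> nat \<Rightarrow> (complex mat \<Rightarrow> complex mat) \<Rightarrow> bool" where
  "lin_map d d' \<Phi> \<longleftrightarrow>
     (\<forall>X \<in> carrier_mat d d. \<Phi> X \<in> carrier_mat d' d') \<and>
     (\<forall>X \<in> carrier_mat d d. \<forall>Y \<in> carrier_mat d d. \<Phi> (X + Y) = \<Phi> X + \<Phi> Y) \<and>
     (\<forall>X \<in> carrier_mat d d. \<forall>c. \<Phi> (c \<cdot>\<^sub>m X) = c \<cdot>\<^sub>m \<Phi> X)"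

text \<open>Amplification id_k (x) Phi acting on L(C^k (x) C^d): applies Phi blockwise.\<close>
definition ampl :: "nat \<Rightarrow> nat \<Rightarrow> nat \<Rightarrow> (complex mat \<Rightarrow> complex mat) \<Rightarrow> complex mat \<Rightarrow> complex mat" where
  "ampl d d' k \<Phi> M = mat (k * d') (k * d')
     (\<lambda>(r, c). \<Phi> (mat d d (\<lambda>(i, j). M $$ ((r div d') * d + i, (c div d') * d + j)))
                 $$ (r mod d', c mod d'))"

definition completely_positive :: "nat \<Rightarrow> nat \<Rightarrow> (complex mat \<Rightarrow> complex mat) \<Rightarrow> bool" where
  "completely_positive d d' \<Phi> \<longleftrightarrow>
     (\<forall>k M. psd (k * d) M \<longrightarrow> psd (k * d') (ampl d d' k \<Phi> M))"

definition trace_preserving :: "nat \<Rightarrow> (complex mat \<Rightarrow> complex mat) \<Rightarrow> bool" where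
  "trace_preserving d \<Phi> \<longleftrightarrow> (\<forall>X \<in> carrier_mat d d. mtrace (\<Phi> X) = mtrace X)"

definition cptp :: "nat \<Rightarrow> nat \<Rightarrow> (complex mat \<Rightarrow> complex mat) \<Rightarrow> bool" where
  "cptp d d' \<Phi> \<longleftrightarrow> lin_map d d' \<Phi> \<and> completely_positive d d' \<Phi> \<and> trace_preserving d \<Phi>"

text \<open>(Phi (x) Psi)(M): the linear extension of E_ij (x) E_kl |-> Phi(E_ij) (x) Psi(E_kl).\<close>
definition tensor_map :: "nat \<Rightarrow> nat \<Rightarrow> nat \<Rightarrow> nat \<Rightarrow> (complex mat \<Rightarrow> complex mat)
     \<Rightarrow> (complex mat \<Rightarrow> complex mat) \<Rightarrow> complex mat \<Rightarrow> complex mat" where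
  "tensor_map dA dB dA' dB' \<Phi> \<Psi> M = mat (dA' * dB') (dA' * dB')
     (\<lambda>(r, c). \<Sum>i<dA. \<Sum>j<dA. \<Sum>k<dB. \<Sum>l<dB.
        M $$ (i * dB + k, j * dB + l) * \<Phi> (munit dA i j) $$ (r div dB', c div dB')
          * \<Psi> (munit dB k l) $$ (r mod dB', c mod dB'))"

text \<open>Maximal correlation. The maximum is taken as a supremum; 0 is included
  (all values are nonnegative), which fixes the value 0 when no admissible X, Y exist.\<close>
definition max_corr :: "nat \<Rightarrow> nat \<Rightarrow> complex mat \<Rightarrow> real" where
  "max_corr dA dB \<rho> = Sup (insert 0
     {cmod (mtrace (\<rho> * kron X (dagger Y))) | X Y.
        X \<in> carrier_mat dA dA \<and> Y \<in> carrier_mat dB dB \<and>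
        mtrace (ptrace_B dA dB \<rho> * X) = 0 \<and> mtrace (ptrace_A dA dB \<rho> * Y) = 0 \<and>
        mtrace (ptrace_B dA dB \<rho> * X * dagger X) = 1 \<and>
        mtrace (ptrace_A dA dB \<rho> * Y * dagger Y) = 1})"

definition decomposition :: "nat \<Rightarrow> nat \<Rightarrow> complex mat \<Rightarrow> (real \<times> complex mat) list \<Rightarrow> bool" where
  "decomposition dA dB \<rho> D \<longleftrightarrow> D \<noteq> [] \<and>
     (\<forall>(p, \<tau>) \<in> set D. p \<ge> 0 \<and> density (dA * dB) \<tau>) \<and>
     \<rho> = foldr (\<lambda>(p, \<tau>) acc. complex_of_real p \<cdot>\<^sub>m \<tau> + acc) D (0\<^sub>m (dA * dB) (dA * dB))"

definition max_ent :: "nat \<Rightarrow> nat \<Rightarrow> complex mat \<Rightarrow> real" where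
  "max_ent dA dB \<rho> = Inf {Max (set (map (\<lambda>(p, \<tau>). max_corr dA dB \<tau>) D)) | D.
      decomposition dA dB \<rho> D}"

end

theory Submission
  imports Defs "HOL-Analysis.Convex"
begin

text \<open>The linear map \<open>\<Phi> \<otimes> \<Psi>\<close> sends a decomposition \<open>\<rho> = \<Sum>\<^sub>i p\<^sub>i \<tau>\<^sub>i\<close> to the decomposition
  \<open>\<sigma> = \<Sum>\<^sub>i p\<^sub>i (\<Phi> \<otimes> \<Psi>)(\<tau>\<^sub>i)\<close> into states, so it suffices that local channels do not increase
  the maximal correlation. For an admissible pair \<open>X', Y'\<close> of \<open>(\<Phi> \<otimes> \<Psi>)(\<tau>)\<close>, the
  Heisenberg-picture images \<open>X = \<Phi>\<^sup>*(X')\<close>, \<open>Y = \<Psi>\<^sup>*(Y')\<close> have the same correlation with \<open>\<tau>\<close>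
  and vanishing means, and by the Kadison--Schwarz inequality for the unital completely positive
  maps \<open>\<Phi>\<^sup>*\<close>, \<open>\<Psi>\<^sup>*\<close> their norms are at most 1; rescaling them to norm 1 only increases the
  correlation. Complete positivity is used through Kraus operators, read off a Gram factorization of
  the positive semidefinite Choi matrix. The same factorization of \<open>\<tau>\<close> and Cauchy--Schwarz bound
  all correlations by 1, so the supremum defining the maximal correlation is finite.\<close>

lemma sum_lessThan_mult_nat: "(\<Sum>r<a*b. f r) = (\<Sum>i<a. \<Sum>k<b. f (i*b+k::nat))"
proof (induction a)
  case 0 then show ?case by simp
next
  case (Suc a)
  have split: "{..<Suc a*b} = {..<a*b} \<union> {a*b..<a*b+b}" by auto
  have "(\<Sum>r<Suc a*b. f r) = (\<Sum>r<a*b. f r) + (\<Sum>r\<in>{a*b..<a*b+b}. f r)"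
    unfolding split by (rule sum.union_disjoint) auto
  also have "(\<Sum>r\<in>{a*b..<a*b+b}. f r) = (\<Sum>k<b. f (a*b+k))"
    using sum.shift_bounds_nat_ivl[of f 0 "a*b" b] by (simp add: lessThan_atLeast0 add.commute)
  finally show ?case using Suc by simp
qed

lemma pair_index:
  assumes "i < a" "k < (b::nat)"
  shows "i*b+k < a*b" "(i*b+k) div b = i" "(i*b+k) mod b = k"
proof -
  have "i*b+k < Suc i * b" using assms by simp
  also have "\<dots> \<le> a*b" using assms by (intro mult_le_mono1) simp
  finally show "i*b+k < a*b" .
  show "(i*b+k) div b = i" "(i*b+k) mod b = k" using assms by auto
qed

lemma sum_mult_delta:
  "finite S \<Longrightarrow> (\<Sum>y\<in>S. g y * (if y = i then a else (0::'a::comm_ring_1))) = (if i \<in> S then g i * a else 0)"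
  by (simp add: if_distrib[where f="\<lambda>x. _ * x"] cong: if_cong)

lemma if_zero_mult: "(if c then a else 0) * z = (if c then a * z else (0::'a::mult_zero))"
  by simp

lemma mult_if_zero: "z * (if c then a else 0) = (if c then z * a else (0::'a::mult_zero))"
  by simp

lemma mtrace_mult:
  assumes "A \<in> carrier_mat n m" "B \<in> carrier_mat m n"
  shows "mtrace (A*B) = (\<Sum>i<n. \<Sum>c<m. A$$(i,c) * B$$(c,i))"
  using assms unfolding mtrace_def
  by (auto simp: scalar_prod_def atLeast0LessThan intro!: sum.cong)

lemma index_mult_mat_sum:
  assumes "A \<in> carrier_mat n m" "B \<in> carrier_mat m p" "i < n" "j < p"
  shows "(A*B)$$(i,j) = (\<Sum>c<m. A$$(i,c) * B$$(c,j))"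
  using assms by (simp add: scalar_prod_def atLeast0LessThan)

lemma dagger_carrier: "Y \<in> carrier_mat n m \<Longrightarrow> dagger Y \<in> carrier_mat m n"
  unfolding dagger_def by simp

lemma index_dagger: "Y \<in> carrier_mat n m \<Longrightarrow> i < m \<Longrightarrow> j < n \<Longrightarrow> dagger Y $$ (i,j) = cnj (Y $$ (j,i))"
  unfolding dagger_def by simp

lemma kron_carrier: "X \<in> carrier_mat a a \<Longrightarrow> Y \<in> carrier_mat b b \<Longrightarrow> kron X Y \<in> carrier_mat (a*b) (a*b)"
  unfolding kron_def by simp

lemma munit_carrier: "munit d p q \<in> carrier_mat d d"
  by (simp add: munit_def)

lemma mtrace_munit: "p < d \<Longrightarrow> q < d \<Longrightarrow> mtrace (munit d p q) = (if p = q then 1 else 0)"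
  unfolding mtrace_def munit_def by (cases "p = q") (auto intro: sum.neutral)

lemma density_carrier: "density n \<tau> \<Longrightarrow> \<tau> \<in> carrier_mat n n"
  unfolding density_def psd_def by simp

lemma mult_cnj_eq_cmod_sq: "z * cnj z = complex_of_real ((cmod z)^2)"
  using complex_norm_square[of z] by simp

lemma cmod_sum_mult_cnj_le:
  fixes a b :: "'a \<Rightarrow> complex"
  shows "(cmod (\<Sum>x\<in>S. a x * cnj (b x)))^2 \<le> (\<Sum>x\<in>S. (cmod (a x))^2) * (\<Sum>x\<in>S. (cmod (b x))^2)"
proof -
  have "cmod (\<Sum>x\<in>S. a x * cnj (b x)) \<le> (\<Sum>x\<in>S. cmod (a x) * cmod (b x))"
    by (rule order_trans[OF norm_sum]) (simp add: norm_mult)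
  then have "(cmod (\<Sum>x\<in>S. a x * cnj (b x)))^2 \<le> (\<Sum>x\<in>S. cmod (a x) * cmod (b x))^2"
    by (intro power_mono) auto
  also have "\<dots> \<le> (\<Sum>x\<in>S. (cmod (a x))^2) * (\<Sum>x\<in>S. (cmod (b x))^2)"
    by (rule Cauchy_Schwarz_ineq_sum)
  finally show ?thesis .
qed

section \<open>Positive semidefinite kernels and Gram factorization\<close>

definition quad_form :: "nat \<Rightarrow> (nat \<Rightarrow> nat \<Rightarrow> complex) \<Rightarrow> (nat \<Rightarrow> complex) \<Rightarrow> complex" where
  "quad_form n f v = (\<Sum>i<n. \<Sum>j<n. cnj (v i) * f i j * v j)"

definition psd_kernel :: "nat \<Rightarrow> (nat \<Rightarrow> nat \<Rightarrow> complex) \<Rightarrow> bool" where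
  "psd_kernel n f \<longleftrightarrow> (\<forall>v. Im (quad_form n f v) = 0 \<and> Re (quad_form n f v) \<ge> 0)"

lemma psd_iff_psd_kernel: "psd n M \<longleftrightarrow> M \<in> carrier_mat n n \<and> psd_kernel n (\<lambda>i j. M $$ (i,j))"
  unfolding psd_def psd_kernel_def quad_form_def Let_def by auto

lemma psd_kernelD: "psd_kernel n f \<Longrightarrow> Im (quad_form n f v) = 0 \<and> Re (quad_form n f v) \<ge> 0"
  unfolding psd_kernel_def by blast

lemma quad_form_single:
  assumes "i < n"
  shows "quad_form n f (\<lambda>y. if y = i then a else 0) = cnj a * a * f i i"
proof -
  have "quad_form n f (\<lambda>y. if y = i then a else 0) = (\<Sum>x<n. (f x i * a) * (if x = i then cnj a else 0))"
    unfolding quad_form_def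
    by (rule sum.cong[OF refl])
      (simp add: sum_mult_delta assms if_distrib[where f=cnj] mult.commute cong: if_cong)
  also have "\<dots> = f i i * a * cnj a" using assms by (simp add: sum_mult_delta)
  finally show ?thesis by (simp add: algebra_simps)
qed

lemma quad_form_pair:
  assumes "i < n" "j < n" "i \<noteq> j"
  shows "quad_form n f (\<lambda>y. (if y = i then a else 0) + (if y = j then b else 0)) =
     cnj a * a * f i i + cnj a * b * f i j + cnj b * a * f j i + cnj b * b * f j j"
proof -
  have pair_sum: "(\<Sum>y<n. g y * ((if y = i then a' else 0) + (if y = j then b' else 0))) = g i * a' + g j * b'"
    for g :: "nat \<Rightarrow> complex" and a' b'
    using assms by (simp add: distrib_left sum.distrib sum_mult_delta)
  have "quad_form n f (\<lambda>y. (if y = i then a else 0) + (if y = j then b else 0)) =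
    (\<Sum>x<n. ((if x = i then cnj a else 0) + (if x = j then cnj b else 0)) * (f x i * a + f x j * b))"
    unfolding quad_form_def
    by (rule sum.cong[OF refl])
      (simp add: sum_distrib_left[symmetric] mult.assoc pair_sum if_distrib[where f=cnj] cong: if_cong)
  also have "\<dots> = (f i i * a + f i j * b) * cnj a + (f j i * a + f j j * b) * cnj b"
    using pair_sum[of "\<lambda>x. f x i * a + f x j * b" "cnj a" "cnj b"] by (simp add: mult.commute)
  finally show ?thesis by (simp add: algebra_simps)
qed

lemma psd_kernel_diag:
  assumes "psd_kernel n f" "i < n"
  shows "Im (f i i) = 0" "Re (f i i) \<ge> 0"
  using psd_kernelD[OF assms(1), of "\<lambda>y. if y = i then 1 else 0"] quad_form_single[OF assms(2), of f 1]
  by auto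

lemma psd_kernel_hermitian:
  assumes "psd_kernel n f" "i < n" "j < n"
  shows "f j i = cnj (f i j)"
proof (cases "i = j")
  case True then show ?thesis using psd_kernel_diag[OF assms(1,2)] by (simp add: complex_eq_iff)
next
  case False
  have diag: "Im (f i i) = 0" "Im (f j j) = 0" using psd_kernel_diag assms by auto
  have "Im (quad_form n f (\<lambda>y. (if y = i then 1 else 0) + (if y = j then 1 else 0))) = 0"
    using psd_kernelD[OF assms(1)] by blast
  then have im: "Im (f i j) + Im (f j i) = 0" using diag by (simp add: quad_form_pair[OF assms(2,3) False])
  have "Im (quad_form n f (\<lambda>y. (if y = i then 1 else 0) + (if y = j then \<i> else 0))) = 0"
    using psd_kernelD[OF assms(1)] by blast
  then have re: "Re (f i j) - Re (f j i) = 0" using diag by (simp add: quad_form_pair[OF assms(2,3) False])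
  show ?thesis using im re by (simp add: complex_eq_iff)
qed

lemma psd_kernel_zero_diag_row:
  assumes "psd_kernel n f" "k < n" "j < n" "f k k = 0"
  shows "f k j = 0"
proof (rule ccontr)
  assume nz: "f k j \<noteq> 0"
  then have "k \<noteq> j" using assms by auto
  define c where "c = f k j"
  define N where "N = (Re c)^2 + (Im c)^2"
  have "N > 0" using nz unfolding N_def c_def by (simp add: complex_eq_iff sum_power2_gt_zero_iff)
  define s where "s = (\<bar>Re (f j j)\<bar> + 1) / (2 * N)"
  \<comment> \<open>test vector t e_k + e_j with t = -s c, which makes the form negative for large s\<close>
  define t where "t = - complex_of_real s * c"
  have herm: "f j k = cnj c" using psd_kernel_hermitian[OF assms(1,2,3)] c_def by simp
  have "Re (quad_form n f (\<lambda>y. (if y = k then t else 0) + (if y = j then 1 else 0))) \<ge> 0"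
    using psd_kernelD[OF assms(1)] by blast
  then have "Re (cnj t * c + t * cnj c + f j j) \<ge> 0"
    by (simp add: quad_form_pair[OF assms(2,3) \<open>k \<noteq> j\<close>] assms(4) herm c_def)
  then have "- 2 * s * N + Re (f j j) \<ge> 0"
    by (simp add: t_def N_def algebra_simps power2_eq_square)
  moreover have "2 * s * N = \<bar>Re (f j j)\<bar> + 1" using \<open>N > 0\<close> by (simp add: s_def)
  ultimately show False by linarith
qed

lemma psd_kernel_restrict: "psd_kernel (Suc n) f \<Longrightarrow> psd_kernel n f"
  unfolding psd_kernel_def
proof
  fix v :: "nat \<Rightarrow> complex"
  assume psd: "\<forall>v. Im (quad_form (Suc n) f v) = 0 \<and> 0 \<le> Re (quad_form (Suc n) f v)"
  have "quad_form (Suc n) f (\<lambda>x. if x < n then v x else 0) = quad_form n f v"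
    unfolding quad_form_def by (simp add: sum.lessThan_Suc)
  then show "Im (quad_form n f v) = 0 \<and> 0 \<le> Re (quad_form n f v)"
    using psd by metis
qed

lemma psd_kernel_schur_complement:
  assumes psd: "psd_kernel (Suc n) f" and pos: "Re (f n n) > 0"
  shows "psd_kernel n (\<lambda>i j. f i j - f i n * f n j / f n n)"
  unfolding psd_kernel_def
proof
  fix v :: "nat \<Rightarrow> complex"
  define c where "c = f n n"
  have "Im c = 0" using psd_kernel_diag[OF psd, of n] c_def by simp
  then have c_real: "c = complex_of_real (Re c)" by (simp add: complex_eq_iff)
  have "c \<noteq> 0" using pos c_def by auto
  define S where "S = (\<Sum>j<n. f n j * v j)"
  define A where "A = (\<Sum>i<n. \<Sum>j<n. cnj (v i) * f i j * v j)"
  \<comment> \<open>extend v by the entry minimizing the form in the last coordinate\<close>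
  define t where "t = - S / c"
  define v' where "v' = (\<lambda>x. if x < n then v x else t)"
  have col: "(\<Sum>i<n. cnj (v i) * f i n) = cnj S"
    unfolding S_def by (simp add: psd_kernel_hermitian[OF psd, of n] mult.commute)
  have "quad_form (Suc n) f v' = (\<Sum>i<n. (\<Sum>j<n. cnj (v i) * f i j * v j) + cnj (v i) * f i n * t)
      + ((\<Sum>j<n. cnj t * f n j * v j) + cnj t * f n n * t)"
    unfolding quad_form_def by (simp add: sum.lessThan_Suc v'_def)
  also have "\<dots> = A + (\<Sum>i<n. cnj (v i) * f i n) * t + cnj t * S + cnj t * c * t"
    by (simp add: A_def S_def c_def sum.distrib sum_distrib_left sum_distrib_right mult.assoc)
  also have "\<dots> = A - cnj S * S / c"
    unfolding col t_def using \<open>c \<noteq> 0\<close> c_real by (simp add: field_simps)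
  also have "\<dots> = quad_form n (\<lambda>i j. f i j - f i n * f n j / f n n) v"
  proof -
    have "quad_form n (\<lambda>i j. f i j - f i n * f n j / f n n) v
        = (\<Sum>i<n. \<Sum>j<n. cnj (v i) * f i j * v j - cnj (v i) * f i n * (f n j * v j) / c)"
      unfolding quad_form_def c_def by (intro sum.cong refl) (simp add: algebra_simps)
    also have "\<dots> = A - (\<Sum>i<n. \<Sum>j<n. cnj (v i) * f i n * (f n j * v j) / c)"
      unfolding A_def by (simp add: sum_subtractf)
    also have "(\<Sum>i<n. \<Sum>j<n. cnj (v i) * f i n * (f n j * v j) / c) = (\<Sum>i<n. cnj (v i) * f i n) * S / c"
      unfolding S_def by (simp add: sum_distrib_left sum_distrib_right sum_divide_distrib) (rule sum.swap)
    finally show ?thesis unfolding col by simp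
  qed
  finally have "quad_form (Suc n) f v' = quad_form n (\<lambda>i j. f i j - f i n * f n j / f n n) v" .
  then show "Im (quad_form n (\<lambda>i j. f i j - f i n * f n j / f n n) v) = 0 \<and>
        0 \<le> Re (quad_form n (\<lambda>i j. f i j - f i n * f n j / f n n) v)"
    using psd_kernelD[OF psd, of v'] by simp
qed

definition gram_factor :: "nat \<Rightarrow> (nat \<Rightarrow> nat \<Rightarrow> complex) \<Rightarrow> (nat \<Rightarrow> nat \<Rightarrow> complex) \<Rightarrow> bool" where
  "gram_factor n f w \<longleftrightarrow> (\<forall>i<n. \<forall>j<n. f i j = (\<Sum>m<n. w m i * cnj (w m j)))"

lemma gram_factor_extend_zero_pivot:
  assumes psd: "psd_kernel (Suc n) f" and pivot: "f n n = 0" and w: "gram_factor n f w"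
  shows "gram_factor (Suc n) f (\<lambda>m i. if m < n \<and> i < n then w m i else 0)"
  unfolding gram_factor_def
proof (intro allI impI)
  fix i j assume i: "i < Suc n" and j: "j < Suc n"
  have row: "f n j = 0" if "j < Suc n" for j using psd_kernel_zero_diag_row[OF psd _ that pivot] by simp
  have col: "f j n = 0" if "j < Suc n" for j using psd_kernel_hermitian[OF psd _ that, of n] row[OF that] by simp
  show "f i j = (\<Sum>m<Suc n. (if m < n \<and> i < n then w m i else 0) * cnj (if m < n \<and> j < n then w m j else 0))"
  proof (cases "i < n \<and> j < n")
    case True then show ?thesis using w by (simp add: gram_factor_def sum.lessThan_Suc)
  next
    case False
    then have "i = n \<or> j = n" using i j by auto
    then show ?thesis using row col i j False by (auto intro!: sum.neutral[symmetric])
  qed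
qed

lemma gram_factor_extend_schur:
  assumes psd: "psd_kernel (Suc n) f" and pos: "Re (f n n) > 0"
    and w: "gram_factor n (\<lambda>i j. f i j - f i n * f n j / f n n) w"
  defines "r \<equiv> complex_of_real (sqrt (Re (f n n)))"
  shows "gram_factor (Suc n) f (\<lambda>m i. if m < n then (if i < n then w m i else 0) else f i n / r)"
  unfolding gram_factor_def
proof (intro allI impI)
  fix i j assume i: "i < Suc n" and j: "j < Suc n"
  let ?w = "\<lambda>m i. if m < n then (if i < n then w m i else 0) else f i n / r"
  have "Im (f n n) = 0" using psd_kernel_diag[OF psd, of n] by simp
  then have "r * cnj r = f n n" using pos by (simp add: r_def complex_eq_iff flip: of_real_mult)
  moreover have "f j n = cnj (f n j)" using psd_kernel_hermitian[OF psd _ j, of n] by simp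
  ultimately have last: "?w n i * cnj (?w n j) = f i n * f n j / f n n" by simp
  have "f n n \<noteq> 0" using pos by auto
  have herm_nn: "cnj (f n n) = f n n"
    using \<open>Im (f n n) = 0\<close> by (simp add: complex_eq_iff)
  show "f i j = (\<Sum>m<Suc n. ?w m i * cnj (?w m j))"
  proof (cases "i < n \<and> j < n")
    case True
    then have "f i j - f i n * f n j / f n n = (\<Sum>m<n. ?w m i * cnj (?w m j))"
      using w by (simp add: gram_factor_def)
    then show ?thesis using last by (simp add: diff_eq_eq)
  next
    case False
    then have "(\<Sum>m<n. ?w m i * cnj (?w m j)) = 0" by auto
    moreover have "f i j = f i n * f n j / f n n"
      using False i j \<open>f n n \<noteq> 0\<close> psd_kernel_hermitian[OF psd, of n n] herm_nn
        psd_kernel_hermitian[OF psd _ i, of n] by (cases "i = n"; cases "j = n") (auto simp: field_simps)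
    ultimately show ?thesis using last by simp
  qed
qed

theorem psd_kernel_gram: "psd_kernel n f \<Longrightarrow> \<exists>w. gram_factor n f w"
proof (induction n arbitrary: f)
  case 0 then show ?case by (simp add: gram_factor_def)
next
  case (Suc n)
  have "Im (f n n) = 0" "Re (f n n) \<ge> 0" using psd_kernel_diag[OF Suc.prems, of n] by auto
  then consider "f n n = 0" | "Re (f n n) > 0" by (fastforce simp: complex_eq_iff)
  then show ?case
  proof cases
    case 1
    obtain w where "gram_factor n f w" using Suc.IH[OF psd_kernel_restrict[OF Suc.prems]] by blast
    then show ?thesis using gram_factor_extend_zero_pivot[OF Suc.prems 1] by blast
  next
    case 2
    obtain w where "gram_factor n (\<lambda>i j. f i j - f i n * f n j / f n n) w"
      using Suc.IH[OF psd_kernel_schur_complement[OF Suc.prems 2]] by blast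
    then show ?thesis using gram_factor_extend_schur[OF Suc.prems 2] by blast
  qed
qed

section \<open>Kraus representation of completely positive maps\<close>

text \<open>The unnormalized projector onto \<open>\<Sum>\<^sub>i e\<^sub>i \<otimes> e\<^sub>i\<close>; its image under
  \<open>id \<otimes> \<Phi>\<close> is the Choi matrix of \<open>\<Phi>\<close>.\<close>
definition omega_mat :: "nat \<Rightarrow> complex mat" where
  "omega_mat d = mat (d*d) (d*d) (\<lambda>(r,c). if r div d = r mod d \<and> c div d = c mod d then 1 else 0)"

lemma psd_omega_mat: "psd (d*d) (omega_mat d)"
  unfolding psd_def Let_def
proof (intro conjI allI)
  show "omega_mat d \<in> carrier_mat (d*d) (d*d)" by (simp add: omega_mat_def)
  fix v :: "nat \<Rightarrow> complex"
  define s where "s = (\<Sum>r<d*d. if r div d = r mod d then v r else 0)"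
  have "(\<Sum>i<d*d. \<Sum>j<d*d. cnj (v i) * omega_mat d $$ (i, j) * v j)
      = (\<Sum>i<d*d. \<Sum>j<d*d. (if i div d = i mod d then cnj (v i) else 0) * (if j div d = j mod d then v j else 0))"
    by (intro sum.cong refl) (simp add: omega_mat_def)
  also have "\<dots> = (\<Sum>i<d*d. if i div d = i mod d then cnj (v i) else 0) * s"
    unfolding s_def by (simp add: sum_product)
  also have "(\<Sum>i<d*d. if i div d = i mod d then cnj (v i) else 0) = cnj s"
    unfolding s_def cnj_sum by (intro sum.cong) auto
  finally have q: "(\<Sum>i<d*d. \<Sum>j<d*d. cnj (v i) * omega_mat d $$ (i, j) * v j) = cnj s * s" .
  show "Im (\<Sum>i<d*d. \<Sum>j<d*d. cnj (v i) * omega_mat d $$ (i, j) * v j) = 0" unfolding q by simp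
  show "0 \<le> Re (\<Sum>i<d*d. \<Sum>j<d*d. cnj (v i) * omega_mat d $$ (i, j) * v j)" unfolding q by simp
qed

lemma index_ampl_omega_mat:
  assumes "r < d*d'" "c < d*d'"
  shows "ampl d d' d \<Phi> (omega_mat d) $$ (r,c) = \<Phi> (munit d (r div d') (c div d')) $$ (r mod d', c mod d')"
proof -
  have rc: "r div d' < d" "c div d' < d" using assms by (auto simp: less_mult_imp_div_less mult.commute)
  have "mat d d (\<lambda>(i, j). omega_mat d $$ ((r div d') * d + i, (c div d') * d + j)) = munit d (r div d') (c div d')"
    by (rule eq_matI) (use rc pair_index[OF rc(1)] pair_index[OF rc(2)] in \<open>auto simp: omega_mat_def munit_def\<close>)
  then show ?thesis unfolding ampl_def using assms by (simp add: mult.commute)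
qed

lemma cptp_trace_munit:
  assumes "cptp d d' \<Phi>" "p < d" "q < d"
  shows "(\<Sum>a<d'. \<Phi> (munit d p q) $$ (a,a)) = (if p = q then 1 else 0)"
proof -
  have "\<Phi> (munit d p q) \<in> carrier_mat d' d'"
    using assms munit_carrier unfolding cptp_def lin_map_def by blast
  moreover have "mtrace (\<Phi> (munit d p q)) = mtrace (munit d p q)"
    using assms munit_carrier unfolding cptp_def trace_preserving_def by blast
  ultimately show ?thesis using mtrace_munit[OF assms(2,3)] unfolding mtrace_def by simp
qed

text \<open>Kraus operators \<open>K\<^sub>n\<close>, \<open>n < d*d'\<close>, with \<open>K n a p\<close> the \<open>(a,p)\<close> entry of \<open>K\<^sub>n\<close>:
  \<open>\<Phi> X = \<Sum>\<^sub>n K\<^sub>n X K\<^sub>n\<^sup>\<dagger>\<close>, evaluated on matrix units.\<close>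
locale kraus_rep =
  fixes d d' :: nat and \<Phi> :: "complex mat \<Rightarrow> complex mat" and K :: "nat \<Rightarrow> nat \<Rightarrow> nat \<Rightarrow> complex"
  assumes kraus: "\<And>p q a b. p < d \<Longrightarrow> q < d \<Longrightarrow> a < d' \<Longrightarrow> b < d' \<Longrightarrow>
      \<Phi> (munit d p q) $$ (a,b) = (\<Sum>n<d*d'. K n a p * cnj (K n b q))"
    and trace_munit: "\<And>p q. p < d \<Longrightarrow> q < d \<Longrightarrow> (\<Sum>a<d'. \<Phi> (munit d p q) $$ (a,a)) = (if p = q then 1 else 0)"

lemma cptp_kraus_rep:
  assumes "cptp d d' \<Phi>"
  shows "\<exists>K. kraus_rep d d' \<Phi> K"
proof -
  have "psd (d*d') (ampl d d' d \<Phi> (omega_mat d))"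
    using assms psd_omega_mat unfolding cptp_def completely_positive_def by blast
  then obtain w where w: "gram_factor (d*d') (\<lambda>i j. ampl d d' d \<Phi> (omega_mat d) $$ (i,j)) w"
    using psd_kernel_gram psd_iff_psd_kernel by blast
  have "kraus_rep d d' \<Phi> (\<lambda>n a p. w n (p*d'+a))"
  proof
    fix p q a b assume "p < d" "q < d" "a < d'" "b < d'"
    then show "\<Phi> (munit d p q) $$ (a,b) = (\<Sum>n<d*d'. w n (p*d'+a) * cnj (w n (q*d'+b)))"
      using w index_ampl_omega_mat[of "p*d'+a" d d' "q*d'+b" \<Phi>] pair_index[of p d a d'] pair_index[of q d b d']
      by (simp add: gram_factor_def mult.commute)
  qed (rule cptp_trace_munit[OF assms])
  then show ?thesis by blast
qed

text \<open>The Heisenberg-picture dual, characterized by \<open>tr (\<Phi> Y * X') = tr (Y * dual_map d d' \<Phi> X')\<close>.\<close>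
definition dual_map :: "nat \<Rightarrow> nat \<Rightarrow> (complex mat \<Rightarrow> complex mat) \<Rightarrow> complex mat \<Rightarrow> complex mat" where
  "dual_map d d' \<Phi> X' = mat d d (\<lambda>(j,i). \<Sum>a<d'. \<Sum>a'<d'. \<Phi> (munit d i j) $$ (a,a') * X'$$(a',a))"

lemma dual_map_carrier: "dual_map d d' \<Phi> X' \<in> carrier_mat d d"
  unfolding dual_map_def by simp

lemma index_dual_map:
  "j < d \<Longrightarrow> i < d \<Longrightarrow> dual_map d d' \<Phi> X' $$ (j,i) = (\<Sum>a<d'. \<Sum>a'<d'. \<Phi> (munit d i j) $$ (a,a') * X'$$(a',a))"
  unfolding dual_map_def by simp

context kraus_rep
begin

lemma munit_image_cnj:
  "p < d \<Longrightarrow> q < d \<Longrightarrow> a < d' \<Longrightarrow> b < d' \<Longrightarrow> cnj (\<Phi> (munit d p q) $$ (a,b)) = \<Phi> (munit d q p) $$ (b,a)"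
  by (simp add: kraus mult.commute)

lemma cnj_index_dual_map:
  assumes "k < d" "l < d"
  shows "cnj (dual_map d d' \<Phi> Y' $$ (k,l)) = (\<Sum>b<d'. \<Sum>b'<d'. \<Phi> (munit d k l) $$ (b,b') * cnj (Y'$$(b,b')))"
proof -
  have "cnj (dual_map d d' \<Phi> Y' $$ (k,l)) = (\<Sum>a<d'. \<Sum>a'<d'. \<Phi> (munit d k l) $$ (a',a) * cnj (Y'$$(a',a)))"
    using assms by (simp add: index_dual_map cnj_sum munit_image_cnj)
  also have "\<dots> = (\<Sum>b<d'. \<Sum>b'<d'. \<Phi> (munit d k l) $$ (b,b') * cnj (Y'$$(b,b')))"
    by (rule sum.swap)
  finally show ?thesis .
qed

lemma kraus_completeness:
  assumes "p < d" "q < d"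
  shows "(\<Sum>n<d*d'. \<Sum>a<d'. K n a p * cnj (K n a q)) = (if p = q then 1 else 0)"
proof -
  have "(\<Sum>n<d*d'. \<Sum>a<d'. K n a p * cnj (K n a q)) = (\<Sum>a<d'. \<Phi> (munit d p q) $$ (a,a))"
    using assms by (simp add: kraus) (rule sum.swap)
  then show ?thesis using trace_munit[OF assms] by simp
qed

end

text \<open>Coordinate forms of \<open>tr (\<rho> * kron X (dagger Y))\<close>, of the two reduced states, and of
  \<open>tr (R X)\<close> and \<open>tr (R X X\<^sup>\<dagger>)\<close> for a kernel \<open>R\<close>.\<close>
definition corr_sum :: "nat \<Rightarrow> nat \<Rightarrow> complex mat \<Rightarrow> complex mat \<Rightarrow> complex mat \<Rightarrow> complex" where
  "corr_sum dA dB \<rho> X Y = (\<Sum>i<dA. \<Sum>k<dB. \<Sum>j<dA. \<Sum>l<dB. \<rho>$$(i*dB+k, j*dB+l) * (X$$(j,i) * cnj (Y$$(k,l))))"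

definition red_A :: "nat \<Rightarrow> complex mat \<Rightarrow> nat \<Rightarrow> nat \<Rightarrow> complex" where
  "red_A dB \<rho> i j = (\<Sum>k<dB. \<rho>$$(i*dB+k, j*dB+k))"

definition red_B :: "nat \<Rightarrow> nat \<Rightarrow> complex mat \<Rightarrow> nat \<Rightarrow> nat \<Rightarrow> complex" where
  "red_B dA dB \<rho> k l = (\<Sum>i<dA. \<rho>$$(i*dB+k, i*dB+l))"

definition tr_form :: "nat \<Rightarrow> (nat \<Rightarrow> nat \<Rightarrow> complex) \<Rightarrow> complex mat \<Rightarrow> complex" where
  "tr_form d R X = (\<Sum>i<d. \<Sum>j<d. R i j * X$$(j,i))"

definition tr_sq_form :: "nat \<Rightarrow> (nat \<Rightarrow> nat \<Rightarrow> complex) \<Rightarrow> complex mat \<Rightarrow> complex" where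
  "tr_sq_form d R X = (\<Sum>i<d. \<Sum>j<d. R i j * (\<Sum>t<d. X$$(j,t) * cnj (X$$(i,t))))"

lemma mtrace_kron_dagger:
  assumes \<rho>: "\<rho> \<in> carrier_mat (dA*dB) (dA*dB)" and X: "X \<in> carrier_mat dA dA" and Y: "Y \<in> carrier_mat dB dB"
  shows "mtrace (\<rho> * kron X (dagger Y)) = corr_sum dA dB \<rho> X Y"
proof -
  have "kron X (dagger Y) \<in> carrier_mat (dA*dB) (dA*dB)" using kron_carrier[OF X dagger_carrier[OF Y]] .
  then have "mtrace (\<rho> * kron X (dagger Y)) = (\<Sum>r<dA*dB. \<Sum>c<dA*dB. \<rho>$$(r,c) * kron X (dagger Y) $$ (c,r))"
    by (rule mtrace_mult[OF \<rho>])
  also have "\<dots> = corr_sum dA dB \<rho> X Y"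
    unfolding corr_sum_def sum_lessThan_mult_nat
    by (intro sum.cong refl) (use X Y in \<open>simp add: kron_def pair_index dagger_def\<close>)
  finally show ?thesis .
qed

lemma ptrace_B_carrier: "ptrace_B dA dB \<rho> \<in> carrier_mat dA dA"
  unfolding ptrace_B_def by simp

lemma ptrace_A_carrier: "ptrace_A dA dB \<rho> \<in> carrier_mat dB dB"
  unfolding ptrace_A_def by simp

lemma mtrace_ptrace_B_mult:
  assumes "X \<in> carrier_mat dA dA"
  shows "mtrace (ptrace_B dA dB \<rho> * X) = tr_form dA (red_A dB \<rho>) X"
  unfolding mtrace_mult[OF ptrace_B_carrier assms] tr_form_def
  by (intro sum.cong refl) (simp add: ptrace_B_def red_A_def)

lemma mtrace_ptrace_A_mult:
  assumes "Y \<in> carrier_mat dB dB"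
  shows "mtrace (ptrace_A dA dB \<rho> * Y) = tr_form dB (red_B dA dB \<rho>) Y"
  unfolding mtrace_mult[OF ptrace_A_carrier assms] tr_form_def
  by (intro sum.cong refl) (simp add: ptrace_A_def red_B_def)

lemma mtrace_mult_mult_dagger:
  assumes X: "X \<in> carrier_mat d d" and P: "P \<in> carrier_mat d d"
  shows "mtrace (P * X * dagger X) = tr_sq_form d (\<lambda>i j. P$$(i,j)) X"
proof -
  have "P * X \<in> carrier_mat d d" using P X by simp
  then have "mtrace (P * X * dagger X) = (\<Sum>i<d. \<Sum>c<d. (P*X)$$(i,c) * dagger X $$ (c,i))"
    by (rule mtrace_mult[OF _ dagger_carrier[OF X]])
  also have "\<dots> = (\<Sum>i<d. \<Sum>c<d. (\<Sum>j<d. P$$(i,j) * X$$(j,c)) * cnj (X $$ (i,c)))"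
    by (intro sum.cong refl) (simp add: index_mult_mat_sum[OF P X] index_dagger[OF X])
  also have "\<dots> = tr_sq_form d (\<lambda>i j. P$$(i,j)) X"
    unfolding tr_sq_form_def
    by (simp add: sum_distrib_left sum_distrib_right mult.assoc) (rule sum.cong[OF refl], rule sum.swap)
  finally show ?thesis .
qed

lemma mtrace_ptrace_B_mult_dagger:
  assumes "X \<in> carrier_mat dA dA"
  shows "mtrace (ptrace_B dA dB \<rho> * X * dagger X) = tr_sq_form dA (red_A dB \<rho>) X"
proof -
  have "tr_sq_form dA (\<lambda>i j. ptrace_B dA dB \<rho> $$ (i,j)) X = tr_sq_form dA (red_A dB \<rho>) X"
    unfolding tr_sq_form_def by (intro sum.cong refl) (simp add: ptrace_B_def red_A_def)
  then show ?thesis using mtrace_mult_mult_dagger[OF assms ptrace_B_carrier] by simp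
qed

lemma mtrace_ptrace_A_mult_dagger:
  assumes "Y \<in> carrier_mat dB dB"
  shows "mtrace (ptrace_A dA dB \<rho> * Y * dagger Y) = tr_sq_form dB (red_B dA dB \<rho>) Y"
proof -
  have "tr_sq_form dB (\<lambda>i j. ptrace_A dA dB \<rho> $$ (i,j)) Y = tr_sq_form dB (red_B dA dB \<rho>) Y"
    unfolding tr_sq_form_def by (intro sum.cong refl) (simp add: ptrace_A_def red_B_def)
  then show ?thesis using mtrace_mult_mult_dagger[OF assms ptrace_A_carrier] by simp
qed

lemma tr_sq_form_eq_tr_form:
  assumes X: "X \<in> carrier_mat d d"
  shows "tr_sq_form d R X = tr_form d R (X * dagger X)"
  unfolding tr_sq_form_def tr_form_def
  by (intro sum.cong refl) (simp add: index_mult_mat_sum[OF X dagger_carrier[OF X]] index_dagger[OF X])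

lemma tr_form_smult: "tr_form d R (c \<cdot>\<^sub>m X) = c * tr_form d R X" if "X \<in> carrier_mat d d"
  using that unfolding tr_form_def by (simp add: sum_distrib_left mult_ac)

lemma tr_sq_form_smult: "tr_sq_form d R (c \<cdot>\<^sub>m X) = (c * cnj c) * tr_sq_form d R X" if "X \<in> carrier_mat d d"
  using that unfolding tr_sq_form_def by (simp add: sum_distrib_left mult_ac)

lemma corr_sum_smult:
  "X \<in> carrier_mat dA dA \<Longrightarrow> Y \<in> carrier_mat dB dB \<Longrightarrow>
   corr_sum dA dB \<tau> (c \<cdot>\<^sub>m X) (e \<cdot>\<^sub>m Y) = (c * cnj e) * corr_sum dA dB \<tau> X Y"
  unfolding corr_sum_def by (simp add: sum_distrib_left mult_ac)

section \<open>The Kadison--Schwarz inequality\<close>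

context kraus_rep
begin

text \<open>For a vector \<open>v\<close>, let \<open>u = v\<^sup>\<dagger> \<Phi>\<^sup>*(X')\<close>, \<open>b\<^sub>n = v\<^sup>\<dagger> K\<^sub>n\<^sup>\<dagger> X'\<close> and \<open>d\<^sub>n = u K\<^sub>n\<^sup>\<dagger>\<close>.
  Then \<open>\<Sum>\<^sub>n \<langle>b\<^sub>n, d\<^sub>n\<rangle> = |u|\<^sup>2\<close>, while \<open>\<Sum>\<^sub>n |d\<^sub>n|\<^sup>2 = |u|\<^sup>2\<close> because \<open>\<Sum>\<^sub>n K\<^sub>n\<^sup>\<dagger> K\<^sub>n = 1\<close>, so
  Cauchy--Schwarz gives \<open>|u|\<^sup>2 \<le> \<Sum>\<^sub>n |b\<^sub>n|\<^sup>2 = v\<^sup>\<dagger> \<Phi>\<^sup>*(X' X'\<^sup>\<dagger>) v\<close>: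
  the Kadison--Schwarz inequality for the unital map \<open>\<Phi>\<^sup>*\<close>.\<close>
context
  fixes X' :: "complex mat" and v :: "nat \<Rightarrow> complex"
  assumes X': "X' \<in> carrier_mat d' d'"
begin

definition "ks_u t = (\<Sum>j<d. cnj (v j) * dual_map d d' \<Phi> X' $$ (j,t))"
definition "ks_b n a = (\<Sum>a'<d'. \<Sum>j<d. cnj (v j) * cnj (K n a' j) * X'$$(a',a))"
definition "ks_d n a = (\<Sum>t<d. cnj (K n a t) * ks_u t)"

lemma ks_lhs_eq:
  "(\<Sum>i<d. \<Sum>j<d. v i * cnj (v j) * (\<Sum>t<d. dual_map d d' \<Phi> X' $$ (j,t) * cnj (dual_map d d' \<Phi> X' $$ (i,t))))
   = (\<Sum>t<d. ks_u t * cnj (ks_u t))"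
  unfolding ks_u_def
  apply (simp only: cnj_sum complex_cnj_mult complex_cnj_cnj sum_distrib_left sum_distrib_right)
  apply (simp only: sum.cartesian_product)
  apply (rule sum.reindex_bij_witness[where j="\<lambda>(i,j,t). (t,i,j)" and i="\<lambda>(t,i,j). (i,j,t)"])
  apply (auto simp: mult_ac)
  done

lemma ks_u_kraus: "t < d \<Longrightarrow> ks_u t = (\<Sum>n<d*d'. \<Sum>a<d'. K n a t * ks_b n a)"
proof -
  assume t: "t < d"
  have "ks_u t = (\<Sum>j<d. cnj (v j) * (\<Sum>a<d'. \<Sum>a'<d'. (\<Sum>n<d*d'. K n a t * cnj (K n a' j)) * X'$$(a',a)))"
    unfolding ks_u_def using t by (intro sum.cong refl) (simp add: index_dual_map kraus)
  also have "\<dots> = (\<Sum>n<d*d'. \<Sum>a<d'. K n a t * ks_b n a)"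
    unfolding ks_b_def
    apply (simp only: sum_distrib_left sum_distrib_right)
    apply (simp only: sum.cartesian_product)
    apply (rule sum.reindex_bij_witness[where j="\<lambda>(j,a,a',n). (n,a,a',j)" and i="\<lambda>(n,a,a',j). (j,a,a',n)"])
    apply (auto simp: mult_ac)
    done
  finally show ?thesis .
qed

lemma ks_rhs_eq:
  "(\<Sum>i<d. \<Sum>j<d. v i * cnj (v j) * dual_map d d' \<Phi> (X' * dagger X') $$ (j,i))
   = (\<Sum>n<d*d'. \<Sum>c<d'. ks_b n c * cnj (ks_b n c))"
proof -
  have "(\<Sum>i<d. \<Sum>j<d. v i * cnj (v j) * dual_map d d' \<Phi> (X' * dagger X') $$ (j,i))
    = (\<Sum>i<d. \<Sum>j<d. v i * cnj (v j) * (\<Sum>a<d'. \<Sum>a'<d'. (\<Sum>n<d*d'. K n a i * cnj (K n a' j)) * (\<Sum>c<d'. X'$$(a',c) * cnj (X'$$(a,c)))))"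
    by (intro sum.cong refl)
      (simp add: index_dual_map kraus index_mult_mat_sum[OF X' dagger_carrier[OF X']] index_dagger[OF X'])
  also have "\<dots> = (\<Sum>n<d*d'. \<Sum>c<d'. ks_b n c * cnj (ks_b n c))"
    unfolding ks_b_def
    apply (simp only: cnj_sum complex_cnj_mult complex_cnj_cnj sum_distrib_left sum_distrib_right)
    apply (simp only: sum.cartesian_product)
    apply (rule sum.reindex_bij_witness[where j="\<lambda>(i,j,a,a',c,n). (n,c,a,i,a',j)" and i="\<lambda>(n,c,a,i,a',j). (i,j,a,a',c,n)"])
    apply (auto simp: mult_ac)
    done
  finally show ?thesis .
qed

lemma ks_inner_eq: "(\<Sum>n<d*d'. \<Sum>a<d'. ks_b n a * cnj (ks_d n a)) = (\<Sum>t<d. ks_u t * cnj (ks_u t))"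
proof -
  have "(\<Sum>n<d*d'. \<Sum>a<d'. ks_b n a * cnj (ks_d n a)) = (\<Sum>t<d. (\<Sum>n<d*d'. \<Sum>a<d'. K n a t * ks_b n a) * cnj (ks_u t))"
    unfolding ks_d_def
    apply (simp only: cnj_sum complex_cnj_mult complex_cnj_cnj sum_distrib_left sum_distrib_right)
    apply (simp only: sum.cartesian_product)
    apply (rule sum.reindex_bij_witness[where j="\<lambda>(n,a,t). (t,n,a)" and i="\<lambda>(t,n,a). (n,a,t)"])
    apply (auto simp: mult_ac)
    done
  also have "\<dots> = (\<Sum>t<d. ks_u t * cnj (ks_u t))"
    by (intro sum.cong refl) (simp add: ks_u_kraus)
  finally show ?thesis .
qed

lemma ks_norm_d_eq: "(\<Sum>n<d*d'. \<Sum>a<d'. ks_d n a * cnj (ks_d n a)) = (\<Sum>t<d. ks_u t * cnj (ks_u t))"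
proof -
  have "(\<Sum>n<d*d'. \<Sum>a<d'. ks_d n a * cnj (ks_d n a))
      = (\<Sum>t<d. \<Sum>t'<d. ks_u t * cnj (ks_u t') * (\<Sum>n<d*d'. \<Sum>a<d'. K n a t' * cnj (K n a t)))"
    unfolding ks_d_def
    apply (simp only: cnj_sum complex_cnj_mult complex_cnj_cnj sum_distrib_left sum_distrib_right)
    apply (simp only: sum.cartesian_product)
    apply (rule sum.reindex_bij_witness[where j="\<lambda>(n,a,t,t'). (t',t,n,a)" and i="\<lambda>(t',t,n,a). (n,a,t,t')"])
    apply (auto simp: mult_ac)
    done
  also have "\<dots> = (\<Sum>t<d. ks_u t * cnj (ks_u t))"
    by (simp add: kraus_completeness if_distrib[where f="\<lambda>x. _ * x"] cong: if_cong)
  finally show ?thesis .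
qed

lemma kadison_schwarz_vec:
  "Re (\<Sum>i<d. \<Sum>j<d. v i * cnj (v j) * (\<Sum>t<d. dual_map d d' \<Phi> X' $$ (j,t) * cnj (dual_map d d' \<Phi> X' $$ (i,t))))
   \<le> Re (\<Sum>i<d. \<Sum>j<d. v i * cnj (v j) * dual_map d d' \<Phi> (X' * dagger X') $$ (j,i))"
proof -
  define U where "U = (\<Sum>t<d. (cmod (ks_u t))^2)"
  define B where "B = (\<Sum>n<d*d'. \<Sum>c<d'. (cmod (ks_b n c))^2)"
  define D where "D = (\<Sum>n<d*d'. \<Sum>c<d'. (cmod (ks_d n c))^2)"
  have "complex_of_real D = complex_of_real U"
    using ks_norm_d_eq by (simp add: D_def U_def mult_cnj_eq_cmod_sq)
  then have "D = U" by simp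
  have "(cmod (\<Sum>n<d*d'. \<Sum>a<d'. ks_b n a * cnj (ks_d n a)))^2 \<le> B * D"
    using cmod_sum_mult_cnj_le[of "\<lambda>(n,a). ks_b n a" "\<lambda>(n,a). ks_d n a" "{..<d*d'} \<times> {..<d'}"]
    by (simp add: B_def D_def sum.cartesian_product case_prod_beta)
  moreover have "(\<Sum>n<d*d'. \<Sum>a<d'. ks_b n a * cnj (ks_d n a)) = complex_of_real U"
    unfolding ks_inner_eq U_def by (simp add: mult_cnj_eq_cmod_sq)
  moreover have "U \<ge> 0" unfolding U_def by (simp add: sum_nonneg)
  ultimately have "U^2 \<le> B * U" using \<open>D = U\<close> by simp
  moreover have "B \<ge> 0" unfolding B_def by (simp add: sum_nonneg)
  ultimately have "U \<le> B" using \<open>U \<ge> 0\<close>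
    by (metis mult_right_le_imp_le order_le_less power2_eq_square zero_le_mult_iff)
  then show ?thesis
    unfolding ks_lhs_eq ks_rhs_eq U_def B_def by (simp add: mult_cnj_eq_cmod_sq)
qed

end

lemma kadison_schwarz:
  assumes X': "X' \<in> carrier_mat d' d'"
    and R: "\<And>i j. i < d \<Longrightarrow> j < d \<Longrightarrow> R i j = (\<Sum>s\<in>S. v s i * cnj (v s j))"
  shows "Re (tr_sq_form d R (dual_map d d' \<Phi> X')) \<le> Re (tr_form d R (dual_map d d' \<Phi> (X' * dagger X')))"
proof -
  have "tr_sq_form d R (dual_map d d' \<Phi> X') = (\<Sum>s\<in>S. \<Sum>i<d. \<Sum>j<d. v s i * cnj (v s j) *
      (\<Sum>t<d. dual_map d d' \<Phi> X' $$ (j,t) * cnj (dual_map d d' \<Phi> X' $$ (i,t))))"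
    unfolding tr_sq_form_def by (simp add: R sum_distrib_right sum.swap[of _ S])
  moreover have "tr_form d R (dual_map d d' \<Phi> (X' * dagger X')) =
      (\<Sum>s\<in>S. \<Sum>i<d. \<Sum>j<d. v s i * cnj (v s j) * dual_map d d' \<Phi> (X' * dagger X') $$ (j,i))"
    unfolding tr_form_def by (simp add: R sum_distrib_right sum.swap[of _ S])
  ultimately show ?thesis
    using sum_mono[of S, OF kadison_schwarz_vec[OF X']] by (simp only: Re_sum)
qed

end

section \<open>Boundedness of the maximal correlation\<close>

locale gram_rep =
  fixes dA dB :: nat and \<rho> :: "complex mat" and M :: "'m set" and w :: "'m \<Rightarrow> nat \<Rightarrow> complex"
  assumes finite_M: "finite M"
    and gram: "\<And>r c. r < dA*dB \<Longrightarrow> c < dA*dB \<Longrightarrow> \<rho>$$(r,c) = (\<Sum>m\<in>M. w m r * cnj (w m c))"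
begin

lemma gram_pair_index:
  "i < dA \<Longrightarrow> k < dB \<Longrightarrow> j < dA \<Longrightarrow> l < dB \<Longrightarrow>
   \<rho>$$(i*dB+k, j*dB+l) = (\<Sum>m\<in>M. w m (i*dB+k) * cnj (w m (j*dB+l)))"
  using gram pair_index by simp

lemma red_A_gram:
  "i < dA \<Longrightarrow> j < dA \<Longrightarrow> red_A dB \<rho> i j =
   (\<Sum>s\<in>M \<times> {..<dB}. w (fst s) (i*dB + snd s) * cnj (w (fst s) (j*dB + snd s)))"
  unfolding red_A_def by (simp add: gram_pair_index) (subst sum.swap, simp add: sum.cartesian_product case_prod_beta)

lemma red_B_gram:
  "k < dB \<Longrightarrow> l < dB \<Longrightarrow> red_B dA dB \<rho> k l =
   (\<Sum>s\<in>M \<times> {..<dA}. w (fst s) (snd s*dB + k) * cnj (w (fst s) (snd s*dB + l)))"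
  unfolding red_B_def by (simp add: gram_pair_index) (subst sum.swap, simp add: sum.cartesian_product case_prod_beta)

lemma corr_sum_gram: "corr_sum dA dB \<rho> X Y = (\<Sum>m\<in>M. \<Sum>i<dA. \<Sum>l<dB.
    (\<Sum>j<dA. cnj (w m (j*dB+l)) * X$$(j,i)) * cnj (\<Sum>k<dB. cnj (w m (i*dB+k)) * Y$$(k,l)))"
proof -
  have "corr_sum dA dB \<rho> X Y = (\<Sum>i<dA. \<Sum>k<dB. \<Sum>j<dA. \<Sum>l<dB.
      (\<Sum>m\<in>M. w m (i*dB+k) * cnj (w m (j*dB+l))) * (X$$(j,i) * cnj (Y$$(k,l))))"
    unfolding corr_sum_def by (intro sum.cong refl) (simp add: gram_pair_index)
  also have "\<dots> = (\<Sum>m\<in>M. \<Sum>i<dA. \<Sum>l<dB.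
    (\<Sum>j<dA. cnj (w m (j*dB+l)) * X$$(j,i)) * cnj (\<Sum>k<dB. cnj (w m (i*dB+k)) * Y$$(k,l)))"
    apply (simp only: cnj_sum complex_cnj_mult complex_cnj_cnj sum_distrib_left sum_distrib_right)
    apply (simp only: sum.cartesian_product)
    apply (rule sum.reindex_bij_witness[where j="\<lambda>(i,k,j,l,m). (m,i,l,k,j)" and i="\<lambda>(m,i,l,k,j). (i,k,j,l,m)"])
    apply (auto simp: mult_ac)
    done
  finally show ?thesis .
qed

lemma tr_sq_form_red_A_gram: "tr_sq_form dA (red_A dB \<rho>) X = (\<Sum>m\<in>M. \<Sum>i<dA. \<Sum>l<dB.
    (\<Sum>j<dA. cnj (w m (j*dB+l)) * X$$(j,i)) * cnj (\<Sum>j<dA. cnj (w m (j*dB+l)) * X$$(j,i)))"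
proof -
  have "tr_sq_form dA (red_A dB \<rho>) X = (\<Sum>i<dA. \<Sum>j<dA.
      (\<Sum>k<dB. \<Sum>m\<in>M. w m (i*dB+k) * cnj (w m (j*dB+k))) * (\<Sum>t<dA. X$$(j,t) * cnj (X$$(i,t))))"
    unfolding tr_sq_form_def red_A_def by (intro sum.cong refl) (simp add: gram_pair_index)
  also have "\<dots> = (\<Sum>m\<in>M. \<Sum>i<dA. \<Sum>l<dB.
    (\<Sum>j<dA. cnj (w m (j*dB+l)) * X$$(j,i)) * cnj (\<Sum>j<dA. cnj (w m (j*dB+l)) * X$$(j,i)))"
    apply (simp only: cnj_sum complex_cnj_mult complex_cnj_cnj sum_distrib_left sum_distrib_right)
    apply (simp only: sum.cartesian_product)
    apply (rule sum.reindex_bij_witness[where j="\<lambda>(i,j,t,k,m). (m,t,k,i,j)" and i="\<lambda>(m,t,k,i,j). (i,j,t,k,m)"])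
    apply (auto simp: mult_ac)
    done
  finally show ?thesis .
qed

lemma tr_sq_form_red_B_gram: "tr_sq_form dB (red_B dA dB \<rho>) Y = (\<Sum>m\<in>M. \<Sum>i<dA. \<Sum>l<dB.
    (\<Sum>k<dB. cnj (w m (i*dB+k)) * Y$$(k,l)) * cnj (\<Sum>k<dB. cnj (w m (i*dB+k)) * Y$$(k,l)))"
proof -
  have "tr_sq_form dB (red_B dA dB \<rho>) Y = (\<Sum>k<dB. \<Sum>l<dB.
      (\<Sum>i<dA. \<Sum>m\<in>M. w m (i*dB+k) * cnj (w m (i*dB+l))) * (\<Sum>t<dB. Y$$(l,t) * cnj (Y$$(k,t))))"
    unfolding tr_sq_form_def red_B_def by (intro sum.cong refl) (simp add: gram_pair_index)
  also have "\<dots> = (\<Sum>m\<in>M. \<Sum>i<dA. \<Sum>l<dB.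
    (\<Sum>k<dB. cnj (w m (i*dB+k)) * Y$$(k,l)) * cnj (\<Sum>k<dB. cnj (w m (i*dB+k)) * Y$$(k,l)))"
    apply (simp only: cnj_sum complex_cnj_mult complex_cnj_cnj sum_distrib_left sum_distrib_right)
    apply (simp only: sum.cartesian_product)
    apply (rule sum.reindex_bij_witness[where j="\<lambda>(k,l,t,i,m). (m,i,t,k,l)" and i="\<lambda>(m,i,t,k,l). (k,l,t,i,m)"])
    apply (auto simp: mult_ac)
    done
  finally show ?thesis .
qed

lemma tr_sq_form_red_A_nonneg:
  "tr_sq_form dA (red_A dB \<rho>) X = complex_of_real (Re (tr_sq_form dA (red_A dB \<rho>) X))"
  "Re (tr_sq_form dA (red_A dB \<rho>) X) \<ge> 0"
  unfolding tr_sq_form_red_A_gram mult_cnj_eq_cmod_sq of_real_sum[symmetric] by (simp_all add: sum_nonneg)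

lemma tr_sq_form_red_B_nonneg:
  "tr_sq_form dB (red_B dA dB \<rho>) Y = complex_of_real (Re (tr_sq_form dB (red_B dA dB \<rho>) Y))"
  "Re (tr_sq_form dB (red_B dA dB \<rho>) Y) \<ge> 0"
  unfolding tr_sq_form_red_B_gram mult_cnj_eq_cmod_sq of_real_sum[symmetric] by (simp_all add: sum_nonneg)

lemma corr_sum_cauchy_schwarz:
  "(cmod (corr_sum dA dB \<rho> X Y))^2 \<le> Re (tr_sq_form dA (red_A dB \<rho>) X) * Re (tr_sq_form dB (red_B dA dB \<rho>) Y)"
  unfolding corr_sum_gram tr_sq_form_red_A_gram tr_sq_form_red_B_gram
    mult_cnj_eq_cmod_sq of_real_sum[symmetric] Re_complex_of_real
  using cmod_sum_mult_cnj_le[of "\<lambda>(m,i,l). \<Sum>j<dA. cnj (w m (j*dB+l)) * X$$(j,i)"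
      "\<lambda>(m,i,l). \<Sum>k<dB. cnj (w m (i*dB+k)) * Y$$(k,l)" "M \<times> {..<dA} \<times> {..<dB}"]
  by (simp add: sum.cartesian_product case_prod_beta)

end

lemma density_gram_rep:
  assumes "density (dA*dB) \<tau>"
  shows "\<exists>w. gram_rep dA dB \<tau> {..<dA*dB} w"
proof -
  have "psd (dA*dB) \<tau>" using assms unfolding density_def by simp
  then obtain w where "gram_factor (dA*dB) (\<lambda>i j. \<tau> $$ (i,j)) w"
    using psd_kernel_gram psd_iff_psd_kernel by blast
  then have "gram_rep dA dB \<tau> {..<dA*dB} w" by unfold_locales (auto simp: gram_factor_def)
  then show ?thesis by blast
qed

definition corr_values :: "nat \<Rightarrow> nat \<Rightarrow> complex mat \<Rightarrow> real set" where
  "corr_values dA dB \<rho> = {cmod (mtrace (\<rho> * kron X (dagger Y))) | X Y.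
        X \<in> carrier_mat dA dA \<and> Y \<in> carrier_mat dB dB \<and>
        mtrace (ptrace_B dA dB \<rho> * X) = 0 \<and> mtrace (ptrace_A dA dB \<rho> * Y) = 0 \<and>
        mtrace (ptrace_B dA dB \<rho> * X * dagger X) = 1 \<and>
        mtrace (ptrace_A dA dB \<rho> * Y * dagger Y) = 1}"

lemma max_corr_corr_values: "max_corr dA dB \<rho> = Sup (insert 0 (corr_values dA dB \<rho>))"
  unfolding max_corr_def corr_values_def ..

lemma corr_values_le_1:
  assumes "density (dA*dB) \<tau>" "x \<in> corr_values dA dB \<tau>"
  shows "x \<le> 1"
proof -
  obtain w where "gram_rep dA dB \<tau> {..<dA*dB} w" using density_gram_rep[OF assms(1)] by blast
  obtain X Y where X: "X \<in> carrier_mat dA dA" and Y: "Y \<in> carrier_mat dB dB"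
    and nX: "mtrace (ptrace_B dA dB \<tau> * X * dagger X) = 1"
    and nY: "mtrace (ptrace_A dA dB \<tau> * Y * dagger Y) = 1"
    and x: "x = cmod (mtrace (\<tau> * kron X (dagger Y)))"
    using assms(2) unfolding corr_values_def by blast
  have "x^2 \<le> 1"
    using gram_rep.corr_sum_cauchy_schwarz[OF \<open>gram_rep _ _ _ _ _\<close>, of X Y] nX nY x
      mtrace_kron_dagger[OF density_carrier[OF assms(1)] X Y]
      mtrace_ptrace_B_mult_dagger[OF X] mtrace_ptrace_A_mult_dagger[OF Y] by simp
  then show ?thesis by (simp add: abs_square_le_1 abs_le_iff)
qed

lemma max_corr_nonneg: "density (dA*dB) \<tau> \<Longrightarrow> 0 \<le> max_corr dA dB \<tau>"
  unfolding max_corr_corr_values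
  by (rule cSup_upper) (auto intro!: bdd_aboveI[of _ 1] dest: corr_values_le_1)

lemma max_corr_upper: "density (dA*dB) \<tau> \<Longrightarrow> x \<in> corr_values dA dB \<tau> \<Longrightarrow> x \<le> max_corr dA dB \<tau>"
  unfolding max_corr_corr_values
  by (rule cSup_upper) (auto intro!: bdd_aboveI[of _ 1] dest: corr_values_le_1)

section \<open>The tensor product of two channels\<close>

lemma index_tensor_map:
  assumes "a < dA'" "b < dB'" "a' < dA'" "b' < dB'"
  shows "tensor_map dA dB dA' dB' \<Phi> \<Psi> \<rho> $$ (a*dB'+b, a'*dB'+b') =
    (\<Sum>i<dA. \<Sum>j<dA. \<Sum>k<dB. \<Sum>l<dB. \<rho>$$(i*dB+k, j*dB+l) * \<Phi> (munit dA i j) $$ (a,a') * \<Psi> (munit dB k l) $$ (b,b'))"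
  unfolding tensor_map_def using assms pair_index[OF assms(1,2)] pair_index[OF assms(3,4)] by simp

lemma tensor_map_carrier: "tensor_map dA dB dA' dB' \<Phi> \<Psi> \<rho> \<in> carrier_mat (dA'*dB') (dA'*dB')"
  unfolding tensor_map_def by simp

lemma sum_tensor_map_mult:
  "(\<Sum>a<dA'. \<Sum>b<dB'. \<Sum>a'<dA'. \<Sum>b'<dB'. tensor_map dA dB dA' dB' \<Phi> \<Psi> \<rho> $$ (a*dB'+b, a'*dB'+b') * F a b a' b')
   = (\<Sum>i<dA. \<Sum>k<dB. \<Sum>j<dA. \<Sum>l<dB. \<rho>$$(i*dB+k, j*dB+l) *
        (\<Sum>a<dA'. \<Sum>b<dB'. \<Sum>a'<dA'. \<Sum>b'<dB'. \<Phi> (munit dA i j) $$ (a,a') * \<Psi> (munit dB k l) $$ (b,b') * F a b a' b'))"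
proof -
  have "(\<Sum>a<dA'. \<Sum>b<dB'. \<Sum>a'<dA'. \<Sum>b'<dB'. tensor_map dA dB dA' dB' \<Phi> \<Psi> \<rho> $$ (a*dB'+b, a'*dB'+b') * F a b a' b')
     = (\<Sum>a<dA'. \<Sum>b<dB'. \<Sum>a'<dA'. \<Sum>b'<dB'. (\<Sum>i<dA. \<Sum>j<dA. \<Sum>k<dB. \<Sum>l<dB.
          \<rho>$$(i*dB+k, j*dB+l) * \<Phi> (munit dA i j) $$ (a,a') * \<Psi> (munit dB k l) $$ (b,b')) * F a b a' b')"
    by (intro sum.cong refl) (simp add: index_tensor_map)
  also have "\<dots> = (\<Sum>i<dA. \<Sum>k<dB. \<Sum>j<dA. \<Sum>l<dB. \<rho>$$(i*dB+k, j*dB+l) *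
        (\<Sum>a<dA'. \<Sum>b<dB'. \<Sum>a'<dA'. \<Sum>b'<dB'. \<Phi> (munit dA i j) $$ (a,a') * \<Psi> (munit dB k l) $$ (b,b') * F a b a' b'))"
    apply (simp only: sum_distrib_left sum_distrib_right sum.cartesian_product)
    apply (rule sum.reindex_bij_witness[where j="\<lambda>(a,b,a',b',i,j,k,l). (i,k,j,l,a,b,a',b')" and i="\<lambda>(i,k,j,l,a,b,a',b'). (a,b,a',b',i,j,k,l)"])
    apply (auto simp: mult_ac)
    done
  finally show ?thesis .
qed

lemma corr_sum_tensor_map:
  assumes "cptp dB dB' \<Psi>"
  shows "corr_sum dA' dB' (tensor_map dA dB dA' dB' \<Phi> \<Psi> \<rho>) X' Y' =
    corr_sum dA dB \<rho> (dual_map dA dA' \<Phi> X') (dual_map dB dB' \<Psi> Y')"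
proof -
  obtain L where L: "kraus_rep dB dB' \<Psi> L" using cptp_kraus_rep[OF assms] by blast
  have "corr_sum dA' dB' (tensor_map dA dB dA' dB' \<Phi> \<Psi> \<rho>) X' Y' =
    (\<Sum>i<dA. \<Sum>k<dB. \<Sum>j<dA. \<Sum>l<dB. \<rho>$$(i*dB+k, j*dB+l) *
        (\<Sum>a<dA'. \<Sum>b<dB'. \<Sum>a'<dA'. \<Sum>b'<dB'. \<Phi> (munit dA i j) $$ (a,a') * \<Psi> (munit dB k l) $$ (b,b') *
          (X'$$(a',a) * cnj (Y'$$(b,b')))))"
    unfolding corr_sum_def by (rule sum_tensor_map_mult)
  also have "\<dots> = corr_sum dA dB \<rho> (dual_map dA dA' \<Phi> X') (dual_map dB dB' \<Psi> Y')"
    unfolding corr_sum_def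
  proof (intro sum.cong refl, rule arg_cong[where f="(*) _"])
    fix i k j l assume "i \<in> {..<dA}" "k \<in> {..<dB}" "j \<in> {..<dA}" "l \<in> {..<dB}"
    have "(\<Sum>a<dA'. \<Sum>b<dB'. \<Sum>a'<dA'. \<Sum>b'<dB'. \<Phi> (munit dA i j) $$ (a,a') * \<Psi> (munit dB k l) $$ (b,b') *
          (X'$$(a',a) * cnj (Y'$$(b,b'))))
       = (\<Sum>a<dA'. \<Sum>a'<dA'. \<Phi> (munit dA i j) $$ (a,a') * X'$$(a',a)) *
         (\<Sum>b<dB'. \<Sum>b'<dB'. \<Psi> (munit dB k l) $$ (b,b') * cnj (Y'$$(b,b')))" (is "?L = _")
      apply (simp only: sum_distrib_left sum_distrib_right sum.cartesian_product)
      apply (rule sum.reindex_bij_witness[where j="\<lambda>(a,b,a',b'). ((b,b'),(a,a'))" and i="\<lambda>((b,b'),(a,a')). (a,b,a',b')"])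
      apply (auto simp: mult_ac)
      done
    also have "\<dots> = dual_map dA dA' \<Phi> X' $$ (j,i) * cnj (dual_map dB dB' \<Psi> Y' $$ (k,l))"
      using \<open>i \<in> _\<close> \<open>j \<in> _\<close> \<open>k \<in> _\<close> \<open>l \<in> _\<close>
      by (simp add: index_dual_map[where \<Phi>=\<Phi>] kraus_rep.cnj_index_dual_map[OF L])
    finally show "?L = dual_map dA dA' \<Phi> X' $$ (j,i) * cnj (dual_map dB dB' \<Psi> Y' $$ (k,l))" .
  qed
  finally show ?thesis .
qed

lemma red_A_tensor_map:
  assumes "cptp dB dB' \<Psi>" "a < dA'" "a' < dA'"
  shows "red_A dB' (tensor_map dA dB dA' dB' \<Phi> \<Psi> \<rho>) a a' = (\<Sum>i<dA. \<Sum>j<dA. red_A dB \<rho> i j * \<Phi> (munit dA i j) $$ (a,a'))"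
proof -
  have "red_A dB' (tensor_map dA dB dA' dB' \<Phi> \<Psi> \<rho>) a a' =
     (\<Sum>b<dB'. \<Sum>i<dA. \<Sum>j<dA. \<Sum>k<dB. \<Sum>l<dB. \<rho>$$(i*dB+k, j*dB+l) * \<Phi> (munit dA i j) $$ (a,a') * \<Psi> (munit dB k l) $$ (b,b))"
    unfolding red_A_def using assms by (intro sum.cong refl) (simp add: index_tensor_map)
  also have "\<dots> = (\<Sum>i<dA. \<Sum>j<dA. \<Sum>k<dB. \<Sum>l<dB. \<rho>$$(i*dB+k, j*dB+l) * \<Phi> (munit dA i j) $$ (a,a') * (\<Sum>b<dB'. \<Psi> (munit dB k l) $$ (b,b)))"
    apply (simp only: sum_distrib_left sum.cartesian_product)
    apply (rule sum.reindex_bij_witness[where j="\<lambda>(b,i,j,k,l). (i,j,k,l,b)" and i="\<lambda>(i,j,k,l,b). (b,i,j,k,l)"])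
    apply (auto simp: mult_ac)
    done
  also have "\<dots> = (\<Sum>i<dA. \<Sum>j<dA. \<Sum>k<dB. \<Sum>l<dB. \<rho>$$(i*dB+k, j*dB+l) * \<Phi> (munit dA i j) $$ (a,a') * (if k = l then 1 else 0))"
    using assms(1) by (intro sum.cong refl) (simp add: cptp_trace_munit)
  also have "\<dots> = (\<Sum>i<dA. \<Sum>j<dA. red_A dB \<rho> i j * \<Phi> (munit dA i j) $$ (a,a'))"
    unfolding red_A_def by (intro sum.cong refl) (simp add: sum_distrib_right if_zero_mult mult_if_zero)
  finally show ?thesis .
qed

lemma red_B_tensor_map:
  assumes "cptp dA dA' \<Phi>" "b < dB'" "b' < dB'"
  shows "red_B dA' dB' (tensor_map dA dB dA' dB' \<Phi> \<Psi> \<rho>) b b' = (\<Sum>k<dB. \<Sum>l<dB. red_B dA dB \<rho> k l * \<Psi> (munit dB k l) $$ (b,b'))"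
proof -
  have "red_B dA' dB' (tensor_map dA dB dA' dB' \<Phi> \<Psi> \<rho>) b b' =
     (\<Sum>a<dA'. \<Sum>i<dA. \<Sum>j<dA. \<Sum>k<dB. \<Sum>l<dB. \<rho>$$(i*dB+k, j*dB+l) * \<Phi> (munit dA i j) $$ (a,a) * \<Psi> (munit dB k l) $$ (b,b'))"
    unfolding red_B_def using assms by (intro sum.cong refl) (simp add: index_tensor_map)
  also have "\<dots> = (\<Sum>k<dB. \<Sum>l<dB. \<Sum>i<dA. \<Sum>j<dA. \<rho>$$(i*dB+k, j*dB+l) * (\<Sum>a<dA'. \<Phi> (munit dA i j) $$ (a,a)) * \<Psi> (munit dB k l) $$ (b,b'))"
    apply (simp only: sum_distrib_left sum_distrib_right sum.cartesian_product)
    apply (rule sum.reindex_bij_witness[where j="\<lambda>(a,i,j,k,l). (k,l,i,j,a)" and i="\<lambda>(k,l,i,j,a). (a,i,j,k,l)"])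
    apply (auto simp: mult_ac)
    done
  also have "\<dots> = (\<Sum>k<dB. \<Sum>l<dB. \<Sum>i<dA. \<Sum>j<dA. \<rho>$$(i*dB+k, j*dB+l) * (if i = j then 1 else 0) * \<Psi> (munit dB k l) $$ (b,b'))"
    using assms(1) by (intro sum.cong refl) (simp add: cptp_trace_munit)
  also have "\<dots> = (\<Sum>k<dB. \<Sum>l<dB. red_B dA dB \<rho> k l * \<Psi> (munit dB k l) $$ (b,b'))"
    unfolding red_B_def by (intro sum.cong refl) (simp add: sum_distrib_right if_zero_mult mult_if_zero)
  finally show ?thesis .
qed

lemma tr_form_red_A_tensor_map:
  assumes "cptp dB dB' \<Psi>"
  shows "tr_form dA' (red_A dB' (tensor_map dA dB dA' dB' \<Phi> \<Psi> \<rho>)) X' = tr_form dA (red_A dB \<rho>) (dual_map dA dA' \<Phi> X')"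
proof -
  have "tr_form dA' (red_A dB' (tensor_map dA dB dA' dB' \<Phi> \<Psi> \<rho>)) X' =
    (\<Sum>a<dA'. \<Sum>a'<dA'. (\<Sum>i<dA. \<Sum>j<dA. red_A dB \<rho> i j * \<Phi> (munit dA i j) $$ (a,a')) * X'$$(a',a))"
    unfolding tr_form_def using assms by (intro sum.cong refl) (simp add: red_A_tensor_map)
  also have "\<dots> = (\<Sum>i<dA. \<Sum>j<dA. red_A dB \<rho> i j * (\<Sum>a<dA'. \<Sum>a'<dA'. \<Phi> (munit dA i j) $$ (a,a') * X'$$(a',a)))"
    apply (simp only: sum_distrib_left sum_distrib_right sum.cartesian_product)
    apply (rule sum.reindex_bij_witness[where j="\<lambda>(a,a',i,j). (i,j,a,a')" and i="\<lambda>(i,j,a,a'). (a,a',i,j)"])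
    apply (auto simp: mult_ac)
    done
  also have "\<dots> = tr_form dA (red_A dB \<rho>) (dual_map dA dA' \<Phi> X')"
    unfolding tr_form_def by (intro sum.cong refl) (simp add: index_dual_map)
  finally show ?thesis .
qed

lemma tr_form_red_B_tensor_map:
  assumes "cptp dA dA' \<Phi>"
  shows "tr_form dB' (red_B dA' dB' (tensor_map dA dB dA' dB' \<Phi> \<Psi> \<rho>)) Y' = tr_form dB (red_B dA dB \<rho>) (dual_map dB dB' \<Psi> Y')"
proof -
  have "tr_form dB' (red_B dA' dB' (tensor_map dA dB dA' dB' \<Phi> \<Psi> \<rho>)) Y' =
    (\<Sum>b<dB'. \<Sum>b'<dB'. (\<Sum>k<dB. \<Sum>l<dB. red_B dA dB \<rho> k l * \<Psi> (munit dB k l) $$ (b,b')) * Y'$$(b',b))"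
    unfolding tr_form_def using assms by (intro sum.cong refl) (simp add: red_B_tensor_map)
  also have "\<dots> = (\<Sum>k<dB. \<Sum>l<dB. red_B dA dB \<rho> k l * (\<Sum>b<dB'. \<Sum>b'<dB'. \<Psi> (munit dB k l) $$ (b,b') * Y'$$(b',b)))"
    apply (simp only: sum_distrib_left sum_distrib_right sum.cartesian_product)
    apply (rule sum.reindex_bij_witness[where j="\<lambda>(b,b',k,l). (k,l,b,b')" and i="\<lambda>(k,l,b,b'). (b,b',k,l)"])
    apply (auto simp: mult_ac)
    done
  also have "\<dots> = tr_form dB (red_B dA dB \<rho>) (dual_map dB dB' \<Psi> Y')"
    unfolding tr_form_def by (intro sum.cong refl) (simp add: index_dual_map)
  finally show ?thesis .
qed

lemma mtrace_tensor_map: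
  assumes "cptp dA dA' \<Phi>" "cptp dB dB' \<Psi>" "\<rho> \<in> carrier_mat (dA*dB) (dA*dB)"
  shows "mtrace (tensor_map dA dB dA' dB' \<Phi> \<Psi> \<rho>) = mtrace \<rho>"
proof -
  let ?\<sigma> = "tensor_map dA dB dA' dB' \<Phi> \<Psi> \<rho>"
  let ?\<delta> = "\<lambda>a b a' b'. (if a' = a then 1 else 0) * (if b' = b then 1 else (0::complex))"
  have "mtrace ?\<sigma> = (\<Sum>a<dA'. \<Sum>b<dB'. \<Sum>a'<dA'. \<Sum>b'<dB'. ?\<sigma> $$ (a*dB'+b, a'*dB'+b') * ?\<delta> a b a' b')"
    unfolding mtrace_def using tensor_map_carrier[of dA dB dA' dB' \<Phi> \<Psi> \<rho>]
    by (simp add: sum_lessThan_mult_nat if_zero_mult mult_if_zero)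
  also have "\<dots> = (\<Sum>i<dA. \<Sum>k<dB. \<Sum>j<dA. \<Sum>l<dB. \<rho>$$(i*dB+k, j*dB+l) *
        (\<Sum>a<dA'. \<Sum>b<dB'. \<Sum>a'<dA'. \<Sum>b'<dB'. \<Phi> (munit dA i j) $$ (a,a') * \<Psi> (munit dB k l) $$ (b,b') * ?\<delta> a b a' b'))"
    by (rule sum_tensor_map_mult)
  also have "\<dots> = (\<Sum>i<dA. \<Sum>k<dB. \<Sum>j<dA. \<Sum>l<dB. \<rho>$$(i*dB+k, j*dB+l) *
        ((\<Sum>a<dA'. \<Phi> (munit dA i j) $$ (a,a)) * (\<Sum>b<dB'. \<Psi> (munit dB k l) $$ (b,b))))"
    by (simp add: if_zero_mult mult_if_zero sum_product)
  also have "\<dots> = (\<Sum>i<dA. \<Sum>k<dB. \<rho>$$(i*dB+k, i*dB+k))"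
    using assms(1,2) by (simp add: cptp_trace_munit if_zero_mult mult_if_zero cong: if_cong)
  also have "\<dots> = mtrace \<rho>"
    unfolding mtrace_def using assms(3) by (simp add: sum_lessThan_mult_nat)
  finally show ?thesis .
qed

text \<open>Since \<open>(\<Phi> \<otimes> \<Psi>)(\<tau>) = \<Sum>\<^sub>n\<^sub>,\<^sub>m (K\<^sub>n \<otimes> L\<^sub>m) \<tau> (K\<^sub>n \<otimes> L\<^sub>m)\<^sup>\<dagger>\<close>, its quadratic form at \<open>v\<close>
  is a sum of quadratic forms of \<open>\<tau>\<close>, at the vectors \<open>(K\<^sub>n \<otimes> L\<^sub>m)\<^sup>\<dagger> v\<close>.\<close>
lemma quad_form_tensor_map:
  fixes v :: "nat \<Rightarrow> complex"
  assumes KA: "kraus_rep dA dA' \<Phi> K" and KB: "kraus_rep dB dB' \<Psi> L"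
  defines "z \<equiv> \<lambda>n m j l. \<Sum>a'<dA'. \<Sum>b'<dB'. cnj (K n a' j) * cnj (L m b' l) * v (a'*dB'+b')"
  shows "quad_form (dA'*dB') (\<lambda>i j. tensor_map dA dB dA' dB' \<Phi> \<Psi> \<tau> $$ (i,j)) v =
    (\<Sum>n<dA*dA'. \<Sum>m<dB*dB'. quad_form (dA*dB) (\<lambda>i j. \<tau>$$(i,j)) (\<lambda>r. z n m (r div dB) (r mod dB)))"
proof -
  let ?\<sigma> = "tensor_map dA dB dA' dB' \<Phi> \<Psi> \<tau>"
  have "quad_form (dA'*dB') (\<lambda>i j. ?\<sigma> $$ (i,j)) v =
      (\<Sum>a<dA'. \<Sum>b<dB'. \<Sum>a'<dA'. \<Sum>b'<dB'. ?\<sigma> $$ (a*dB'+b, a'*dB'+b') * (cnj (v (a*dB'+b)) * v (a'*dB'+b')))"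
    unfolding quad_form_def by (simp add: sum_lessThan_mult_nat mult_ac)
  also have "\<dots> = (\<Sum>i<dA. \<Sum>k<dB. \<Sum>j<dA. \<Sum>l<dB. \<tau>$$(i*dB+k, j*dB+l) *
      (\<Sum>a<dA'. \<Sum>b<dB'. \<Sum>a'<dA'. \<Sum>b'<dB'. \<Phi> (munit dA i j) $$ (a,a') * \<Psi> (munit dB k l) $$ (b,b') *
        (cnj (v (a*dB'+b)) * v (a'*dB'+b'))))"
    by (rule sum_tensor_map_mult)
  also have "\<dots> = (\<Sum>i<dA. \<Sum>k<dB. \<Sum>j<dA. \<Sum>l<dB. \<tau>$$(i*dB+k, j*dB+l) *
      (\<Sum>n<dA*dA'. \<Sum>m<dB*dB'. cnj (z n m i k) * z n m j l))"
  proof (intro sum.cong refl, rule arg_cong[where f="(*) _"])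
    fix i k j l assume "i \<in> {..<dA}" "k \<in> {..<dB}" "j \<in> {..<dA}" "l \<in> {..<dB}"
    then have "(\<Sum>a<dA'. \<Sum>b<dB'. \<Sum>a'<dA'. \<Sum>b'<dB'. \<Phi> (munit dA i j) $$ (a,a') * \<Psi> (munit dB k l) $$ (b,b') *
        (cnj (v (a*dB'+b)) * v (a'*dB'+b')))
      = (\<Sum>a<dA'. \<Sum>b<dB'. \<Sum>a'<dA'. \<Sum>b'<dB'. (\<Sum>n<dA*dA'. K n a i * cnj (K n a' j)) *
          (\<Sum>m<dB*dB'. L m b k * cnj (L m b' l)) * (cnj (v (a*dB'+b)) * v (a'*dB'+b')))"
      (is "?L = _")
      by (intro sum.cong refl) (simp add: kraus_rep.kraus[OF KA] kraus_rep.kraus[OF KB])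
    also have "\<dots> = (\<Sum>n<dA*dA'. \<Sum>m<dB*dB'. cnj (z n m i k) * z n m j l)"
      unfolding z_def
      apply (simp only: cnj_sum complex_cnj_mult complex_cnj_cnj sum_distrib_left sum_distrib_right)
      apply (simp only: sum.cartesian_product)
      apply (rule sum.reindex_bij_witness[where j="\<lambda>(a,b,a',b',m,n). (n,m,a',b',a,b)" and i="\<lambda>(n,m,a',b',a,b). (a,b,a',b',m,n)"])
      apply (auto simp: mult_ac)
      done
    finally show "?L = (\<Sum>n<dA*dA'. \<Sum>m<dB*dB'. cnj (z n m i k) * z n m j l)" .
  qed
  also have "\<dots> = (\<Sum>n<dA*dA'. \<Sum>m<dB*dB'. \<Sum>i<dA. \<Sum>k<dB. \<Sum>j<dA. \<Sum>l<dB.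
      cnj (z n m i k) * \<tau>$$(i*dB+k, j*dB+l) * z n m j l)"
    apply (simp only: sum_distrib_left sum_distrib_right)
    apply (simp only: sum.cartesian_product)
    apply (rule sum.reindex_bij_witness[where j="\<lambda>(i,k,j,l,n,m). (n,m,i,k,j,l)" and i="\<lambda>(n,m,i,k,j,l). (i,k,j,l,n,m)"])
    apply (auto simp: mult_ac)
    done
  also have "\<dots> = (\<Sum>n<dA*dA'. \<Sum>m<dB*dB'. quad_form (dA*dB) (\<lambda>i j. \<tau>$$(i,j)) (\<lambda>r. z n m (r div dB) (r mod dB)))"
    unfolding quad_form_def sum_lessThan_mult_nat by (intro sum.cong refl) (simp add: pair_index)
  finally show ?thesis .
qed

lemma psd_tensor_map:
  assumes "psd (dA*dB) \<tau>" and "cptp dA dA' \<Phi>" and "cptp dB dB' \<Psi>"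
  shows "psd (dA'*dB') (tensor_map dA dB dA' dB' \<Phi> \<Psi> \<tau>)"
proof -
  obtain K where KA: "kraus_rep dA dA' \<Phi> K" using cptp_kraus_rep[OF assms(2)] by blast
  obtain L where KB: "kraus_rep dB dB' \<Psi> L" using cptp_kraus_rep[OF assms(3)] by blast
  have "psd_kernel (dA*dB) (\<lambda>i j. \<tau>$$(i,j))" using assms(1) psd_iff_psd_kernel by blast
  then have "psd_kernel (dA'*dB') (\<lambda>i j. tensor_map dA dB dA' dB' \<Phi> \<Psi> \<tau> $$ (i,j))"
    unfolding psd_kernel_def quad_form_tensor_map[OF KA KB] by (simp add: Im_sum Re_sum sum_nonneg)
  then show ?thesis using psd_iff_psd_kernel tensor_map_carrier by blast
qed

lemma density_tensor_map:
  assumes "density (dA*dB) \<tau>" "cptp dA dA' \<Phi>" "cptp dB dB' \<Psi>"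
  shows "density (dA'*dB') (tensor_map dA dB dA' dB' \<Phi> \<Psi> \<tau>)"
  using assms psd_tensor_map[of dA dB \<tau> dA' \<Phi> dB' \<Psi>] mtrace_tensor_map[OF assms(2,3) density_carrier[OF assms(1)]]
  unfolding density_def by simp

lemma tensor_map_smult_add:
  assumes A: "A \<in> carrier_mat (dA*dB) (dA*dB)" and B: "B \<in> carrier_mat (dA*dB) (dA*dB)"
  shows "tensor_map dA dB dA' dB' \<Phi> \<Psi> (c \<cdot>\<^sub>m A + B) =
    c \<cdot>\<^sub>m tensor_map dA dB dA' dB' \<Phi> \<Psi> A + tensor_map dA dB dA' dB' \<Phi> \<Psi> B"
proof (rule eq_matI)
  fix r s assume "r < dim_row (c \<cdot>\<^sub>m tensor_map dA dB dA' dB' \<Phi> \<Psi> A + tensor_map dA dB dA' dB' \<Phi> \<Psi> B)"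
    "s < dim_col (c \<cdot>\<^sub>m tensor_map dA dB dA' dB' \<Phi> \<Psi> A + tensor_map dA dB dA' dB' \<Phi> \<Psi> B)"
  then have rs: "r < dA'*dB'" "s < dA'*dB'" by (auto simp: tensor_map_def)
  have entry: "(c \<cdot>\<^sub>m A + B) $$ (i*dB+k, j*dB+l) = c * A $$ (i*dB+k, j*dB+l) + B $$ (i*dB+k, j*dB+l)"
    if "i < dA" "k < dB" "j < dA" "l < dB" for i k j l
    using that A B pair_index[OF that(1,2)] pair_index[OF that(3,4)] by simp
  show "tensor_map dA dB dA' dB' \<Phi> \<Psi> (c \<cdot>\<^sub>m A + B) $$ (r, s) =
        (c \<cdot>\<^sub>m tensor_map dA dB dA' dB' \<Phi> \<Psi> A + tensor_map dA dB dA' dB' \<Phi> \<Psi> B) $$ (r, s)"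
  proof -
    have "tensor_map dA dB dA' dB' \<Phi> \<Psi> (c \<cdot>\<^sub>m A + B) $$ (r, s) =
      (\<Sum>i<dA. \<Sum>j<dA. \<Sum>k<dB. \<Sum>l<dB. (c * A $$ (i*dB+k, j*dB+l) + B $$ (i*dB+k, j*dB+l)) *
        \<Phi> (munit dA i j) $$ (r div dB', s div dB') * \<Psi> (munit dB k l) $$ (r mod dB', s mod dB'))"
      using rs unfolding tensor_map_def by (simp, intro sum.cong refl) (simp add: entry)
    then show ?thesis using rs unfolding tensor_map_def
      by (simp add: algebra_simps sum.distrib sum_distrib_left)
  qed
qed (auto simp: tensor_map_def)

lemma tensor_map_zero: "tensor_map dA dB dA' dB' \<Phi> \<Psi> (0\<^sub>m (dA*dB) (dA*dB)) = 0\<^sub>m (dA'*dB') (dA'*dB')"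
proof (rule eq_matI)
  have entry: "(0\<^sub>m (dA*dB) (dA*dB) :: complex mat) $$ (i*dB+k, j*dB+l) = 0"
    if "i < dA" "k < dB" "j < dA" "l < dB" for i k j l
    using that pair_index[OF that(1,2)] pair_index[OF that(3,4)] by simp
  fix r s assume "r < dim_row (0\<^sub>m (dA'*dB') (dA'*dB') :: complex mat)" "s < dim_col (0\<^sub>m (dA'*dB') (dA'*dB') :: complex mat)"
  then show "tensor_map dA dB dA' dB' \<Phi> \<Psi> (0\<^sub>m (dA*dB) (dA*dB)) $$ (r, s) = (0\<^sub>m (dA'*dB') (dA'*dB') :: complex mat) $$ (r, s)"
    unfolding tensor_map_def by (simp add: entry)
qed (auto simp: tensor_map_def)

lemma tensor_map_convex_combination:
  fixes D :: "(real \<times> complex mat) list"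
  assumes "\<forall>(p,\<tau>)\<in>set D. \<tau> \<in> carrier_mat (dA*dB) (dA*dB)"
  defines "comb \<equiv> \<lambda>d D. foldr (\<lambda>(p, \<tau>) acc. complex_of_real p \<cdot>\<^sub>m \<tau> + acc) D (0\<^sub>m d d)"
  shows "comb (dA*dB) D \<in> carrier_mat (dA*dB) (dA*dB) \<and>
    tensor_map dA dB dA' dB' \<Phi> \<Psi> (comb (dA*dB) D)
    = comb (dA'*dB') (map (\<lambda>(p,\<tau>). (p, tensor_map dA dB dA' dB' \<Phi> \<Psi> \<tau>)) D)"
  using assms(1)
proof (induction D)
  case Nil then show ?case by (simp add: comb_def tensor_map_zero)
next
  case (Cons x D)
  obtain p \<tau> where x: "x = (p, \<tau>)" by (cases x)
  have "\<tau> \<in> carrier_mat (dA*dB) (dA*dB)" using Cons.prems x by auto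
  then show ?case using Cons tensor_map_smult_add[OF \<open>\<tau> \<in> _\<close>, of "comb (dA*dB) D"] x by (auto simp: comb_def)
qed

lemma decomposition_tensor_map:
  assumes "decomposition dA dB \<rho> D" "cptp dA dA' \<Phi>" "cptp dB dB' \<Psi>"
  shows "decomposition dA' dB' (tensor_map dA dB dA' dB' \<Phi> \<Psi> \<rho>)
    (map (\<lambda>(p,\<tau>). (p, tensor_map dA dB dA' dB' \<Phi> \<Psi> \<tau>)) D)"
proof -
  have "\<forall>(p,\<tau>)\<in>set D. 0 \<le> p \<and> density (dA*dB) \<tau>" using assms(1) unfolding decomposition_def by blast
  then have "\<forall>(p,\<tau>)\<in>set D. \<tau> \<in> carrier_mat (dA*dB) (dA*dB)" using density_carrier by auto
  then show ?thesis
    using assms density_tensor_map[OF _ assms(2,3)]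
      tensor_map_convex_combination[of D dA dB dA' dB' \<Phi> \<Psi>]
    unfolding decomposition_def by auto
qed

lemma corr_values_normalized:
  assumes dens: "density (dA*dB) \<tau>"
    and X: "X \<in> carrier_mat dA dA" and Y: "Y \<in> carrier_mat dB dB"
    and mX: "tr_form dA (red_A dB \<tau>) X = 0" and mY: "tr_form dB (red_B dA dB \<tau>) Y = 0"
    and nX: "tr_sq_form dA (red_A dB \<tau>) X = complex_of_real a" and "a > 0"
    and nY: "tr_sq_form dB (red_B dA dB \<tau>) Y = complex_of_real b" and "b > 0"
  shows "cmod (corr_sum dA dB \<tau> X Y) / (sqrt a * sqrt b) \<in> corr_values dA dB \<tau>"
proof -
  define c1 where "c1 = complex_of_real (1 / sqrt a)"
  define c2 where "c2 = complex_of_real (1 / sqrt b)"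
  have X1: "c1 \<cdot>\<^sub>m X \<in> carrier_mat dA dA" and Y1: "c2 \<cdot>\<^sub>m Y \<in> carrier_mat dB dB" using X Y by auto
  have "c1 * cnj c1 = complex_of_real (1/a)" "c2 * cnj c2 = complex_of_real (1/b)"
    unfolding c1_def c2_def using \<open>a > 0\<close> \<open>b > 0\<close> by (simp_all flip: of_real_mult)
  then have "mtrace (ptrace_B dA dB \<tau> * (c1 \<cdot>\<^sub>m X) * dagger (c1 \<cdot>\<^sub>m X)) = 1"
    "mtrace (ptrace_A dA dB \<tau> * (c2 \<cdot>\<^sub>m Y) * dagger (c2 \<cdot>\<^sub>m Y)) = 1"
    using mtrace_ptrace_B_mult_dagger[OF X1] mtrace_ptrace_A_mult_dagger[OF Y1]
      tr_sq_form_smult[OF X] tr_sq_form_smult[OF Y] nX nY \<open>a > 0\<close> \<open>b > 0\<close>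
    by (simp_all flip: of_real_mult)
  moreover have "mtrace (ptrace_B dA dB \<tau> * (c1 \<cdot>\<^sub>m X)) = 0" "mtrace (ptrace_A dA dB \<tau> * (c2 \<cdot>\<^sub>m Y)) = 0"
    using mtrace_ptrace_B_mult[OF X1] mtrace_ptrace_A_mult[OF Y1] tr_form_smult[OF X] tr_form_smult[OF Y] mX mY
    by simp_all
  ultimately have "cmod (mtrace (\<tau> * kron (c1 \<cdot>\<^sub>m X) (dagger (c2 \<cdot>\<^sub>m Y)))) \<in> corr_values dA dB \<tau>"
    unfolding corr_values_def using X1 Y1 by blast
  moreover have "mtrace (\<tau> * kron (c1 \<cdot>\<^sub>m X) (dagger (c2 \<cdot>\<^sub>m Y))) = (c1 * cnj c2) * corr_sum dA dB \<tau> X Y"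
    using mtrace_kron_dagger[OF density_carrier[OF dens] X1 Y1] corr_sum_smult[OF X Y] by simp
  ultimately show ?thesis
    unfolding c1_def c2_def using \<open>a > 0\<close> \<open>b > 0\<close> by (simp add: norm_mult norm_divide flip: of_real_mult)
qed

text \<open>Rescaling a subnormalized pair to norm 1 can only increase the correlation.\<close>
lemma cmod_corr_sum_le_max_corr:
  assumes dens: "density (dA*dB) \<tau>"
    and X: "X \<in> carrier_mat dA dA" and Y: "Y \<in> carrier_mat dB dB"
    and mX: "tr_form dA (red_A dB \<tau>) X = 0" and mY: "tr_form dB (red_B dA dB \<tau>) Y = 0"
    and nX: "Re (tr_sq_form dA (red_A dB \<tau>) X) \<le> 1" and nY: "Re (tr_sq_form dB (red_B dA dB \<tau>) Y) \<le> 1"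
  shows "cmod (corr_sum dA dB \<tau> X Y) \<le> max_corr dA dB \<tau>"
proof -
  obtain w where "gram_rep dA dB \<tau> {..<dA*dB} w" using density_gram_rep[OF dens] by blast
  then interpret gram_rep dA dB \<tau> "{..<dA*dB}" w .
  define a where "a = Re (tr_sq_form dA (red_A dB \<tau>) X)"
  define b where "b = Re (tr_sq_form dB (red_B dA dB \<tau>) Y)"
  have "a \<ge> 0" "b \<ge> 0" using tr_sq_form_red_A_nonneg tr_sq_form_red_B_nonneg unfolding a_def b_def by auto
  have cs: "(cmod (corr_sum dA dB \<tau> X Y))^2 \<le> a * b" using corr_sum_cauchy_schwarz unfolding a_def b_def .
  have "0 \<le> max_corr dA dB \<tau>" by (rule max_corr_nonneg[OF dens])
  show ?thesis
  proof (cases "a = 0 \<or> b = 0")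
    case True
    then show ?thesis using cs \<open>0 \<le> max_corr dA dB \<tau>\<close> by auto
  next
    case False
    then have "a > 0" "b > 0" using \<open>a \<ge> 0\<close> \<open>b \<ge> 0\<close> by auto
    have "cmod (corr_sum dA dB \<tau> X Y) / (sqrt a * sqrt b) \<le> max_corr dA dB \<tau>"
      using max_corr_upper[OF dens corr_values_normalized[OF dens X Y mX mY _ \<open>a > 0\<close> _ \<open>b > 0\<close>]]
        tr_sq_form_red_A_nonneg tr_sq_form_red_B_nonneg unfolding a_def b_def by simp
    then have "cmod (corr_sum dA dB \<tau> X Y) \<le> (sqrt a * sqrt b) * max_corr dA dB \<tau>"
      using \<open>a > 0\<close> \<open>b > 0\<close> by (simp add: divide_le_eq mult.commute)
    also have "\<dots> \<le> max_corr dA dB \<tau>"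
      using nX nY \<open>a \<ge> 0\<close> \<open>b \<ge> 0\<close> \<open>0 \<le> max_corr dA dB \<tau>\<close> unfolding a_def b_def
      by (intro mult_left_le_one_le) (auto simp: mult_le_one)
    finally show ?thesis .
  qed
qed

lemma tr_sq_form_red_A_dual_map_le:
  assumes "density (dA*dB) \<tau>" "cptp dA dA' \<Phi>" "cptp dB dB' \<Psi>" and X': "X' \<in> carrier_mat dA' dA'"
  shows "Re (tr_sq_form dA (red_A dB \<tau>) (dual_map dA dA' \<Phi> X'))
    \<le> Re (mtrace (ptrace_B dA' dB' (tensor_map dA dB dA' dB' \<Phi> \<Psi> \<tau>) * X' * dagger X'))"
proof -
  obtain w where "gram_rep dA dB \<tau> {..<dA*dB} w" using density_gram_rep[OF assms(1)] by blast
  obtain K where "kraus_rep dA dA' \<Phi> K" using cptp_kraus_rep[OF assms(2)] by blast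
  have "Re (tr_sq_form dA (red_A dB \<tau>) (dual_map dA dA' \<Phi> X'))
      \<le> Re (tr_form dA (red_A dB \<tau>) (dual_map dA dA' \<Phi> (X' * dagger X')))"
    by (rule kraus_rep.kadison_schwarz[OF \<open>kraus_rep _ _ _ K\<close> X'])
      (simp add: gram_rep.red_A_gram[OF \<open>gram_rep _ _ _ _ w\<close>])
  also have "tr_form dA (red_A dB \<tau>) (dual_map dA dA' \<Phi> (X' * dagger X'))
      = mtrace (ptrace_B dA' dB' (tensor_map dA dB dA' dB' \<Phi> \<Psi> \<tau>) * X' * dagger X')"
    unfolding mtrace_ptrace_B_mult_dagger[OF X'] tr_sq_form_eq_tr_form[OF X']
      tr_form_red_A_tensor_map[OF assms(3)] ..
  finally show ?thesis .
qed

lemma tr_sq_form_red_B_dual_map_le: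
  assumes "density (dA*dB) \<tau>" "cptp dA dA' \<Phi>" "cptp dB dB' \<Psi>" and Y': "Y' \<in> carrier_mat dB' dB'"
  shows "Re (tr_sq_form dB (red_B dA dB \<tau>) (dual_map dB dB' \<Psi> Y'))
    \<le> Re (mtrace (ptrace_A dA' dB' (tensor_map dA dB dA' dB' \<Phi> \<Psi> \<tau>) * Y' * dagger Y'))"
proof -
  obtain w where "gram_rep dA dB \<tau> {..<dA*dB} w" using density_gram_rep[OF assms(1)] by blast
  obtain L where "kraus_rep dB dB' \<Psi> L" using cptp_kraus_rep[OF assms(3)] by blast
  have "Re (tr_sq_form dB (red_B dA dB \<tau>) (dual_map dB dB' \<Psi> Y'))
      \<le> Re (tr_form dB (red_B dA dB \<tau>) (dual_map dB dB' \<Psi> (Y' * dagger Y')))"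
    by (rule kraus_rep.kadison_schwarz[OF \<open>kraus_rep _ _ _ L\<close> Y'])
      (simp add: gram_rep.red_B_gram[OF \<open>gram_rep _ _ _ _ w\<close>])
  also have "tr_form dB (red_B dA dB \<tau>) (dual_map dB dB' \<Psi> (Y' * dagger Y'))
      = mtrace (ptrace_A dA' dB' (tensor_map dA dB dA' dB' \<Phi> \<Psi> \<tau>) * Y' * dagger Y')"
    unfolding mtrace_ptrace_A_mult_dagger[OF Y'] tr_sq_form_eq_tr_form[OF Y']
      tr_form_red_B_tensor_map[OF assms(2)] ..
  finally show ?thesis .
qed

lemma max_corr_tensor_map_le:
  assumes dens: "density (dA*dB) \<tau>" and P: "cptp dA dA' \<Phi>" and Q: "cptp dB dB' \<Psi>"
  shows "max_corr dA' dB' (tensor_map dA dB dA' dB' \<Phi> \<Psi> \<tau>) \<le> max_corr dA dB \<tau>"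
  unfolding max_corr_corr_values[of dA' dB']
proof (rule cSup_least)
  let ?\<sigma> = "tensor_map dA dB dA' dB' \<Phi> \<Psi> \<tau>"
  fix x assume "x \<in> insert 0 (corr_values dA' dB' ?\<sigma>)"
  then consider "x = 0" | "x \<in> corr_values dA' dB' ?\<sigma>" by blast
  then show "x \<le> max_corr dA dB \<tau>"
  proof cases
    case 1 then show ?thesis using max_corr_nonneg[OF dens] by simp
  next
    case 2
    then obtain X' Y' where X': "X' \<in> carrier_mat dA' dA'" and Y': "Y' \<in> carrier_mat dB' dB'"
      and mX': "mtrace (ptrace_B dA' dB' ?\<sigma> * X') = 0" and mY': "mtrace (ptrace_A dA' dB' ?\<sigma> * Y') = 0"
      and nX': "mtrace (ptrace_B dA' dB' ?\<sigma> * X' * dagger X') = 1"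
      and nY': "mtrace (ptrace_A dA' dB' ?\<sigma> * Y' * dagger Y') = 1"
      and x: "x = cmod (mtrace (?\<sigma> * kron X' (dagger Y')))"
      unfolding corr_values_def by blast
    have "x = cmod (corr_sum dA dB \<tau> (dual_map dA dA' \<Phi> X') (dual_map dB dB' \<Psi> Y'))"
      unfolding x mtrace_kron_dagger[OF tensor_map_carrier X' Y'] corr_sum_tensor_map[OF Q] ..
    also have "\<dots> \<le> max_corr dA dB \<tau>"
    proof (rule cmod_corr_sum_le_max_corr[OF dens dual_map_carrier dual_map_carrier])
      show "tr_form dA (red_A dB \<tau>) (dual_map dA dA' \<Phi> X') = 0"
        using mX' unfolding mtrace_ptrace_B_mult[OF X'] tr_form_red_A_tensor_map[OF Q] .
      show "tr_form dB (red_B dA dB \<tau>) (dual_map dB dB' \<Psi> Y') = 0"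
        using mY' unfolding mtrace_ptrace_A_mult[OF Y'] tr_form_red_B_tensor_map[OF P] .
      show "Re (tr_sq_form dA (red_A dB \<tau>) (dual_map dA dA' \<Phi> X')) \<le> 1"
        using tr_sq_form_red_A_dual_map_le[OF dens P Q X'] nX' by simp
      show "Re (tr_sq_form dB (red_B dA dB \<tau>) (dual_map dB dB' \<Psi> Y')) \<le> 1"
        using tr_sq_form_red_B_dual_map_le[OF dens P Q Y'] nY' by simp
    qed
    finally show ?thesis .
  qed
qed simp

lemma max_corr_list_nonneg:
  assumes "decomposition dA dB \<rho> D"
  shows "0 \<le> Max (set (map (\<lambda>(p, \<tau>). max_corr dA dB \<tau>) D))"
proof -
  obtain p \<tau> where "(p, \<tau>) \<in> set D" using assms unfolding decomposition_def by (cases D) auto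
  moreover have "0 \<le> max_corr dA dB \<tau>"
    using assms calculation max_corr_nonneg unfolding decomposition_def by auto
  ultimately show ?thesis by (intro order_trans[OF _ Max_ge]) force+
qed

lemma Max_max_corr_tensor_map_le:
  assumes "decomposition dA dB \<rho> D" "cptp dA dA' \<Phi>" "cptp dB dB' \<Psi>"
  shows "Max (set (map (\<lambda>(p, \<tau>). max_corr dA' dB' \<tau>) (map (\<lambda>(p,\<tau>). (p, tensor_map dA dB dA' dB' \<Phi> \<Psi> \<tau>)) D)))
    \<le> Max (set (map (\<lambda>(p, \<tau>). max_corr dA dB \<tau>) D))"
proof (rule Max.boundedI)
  show "set (map (\<lambda>(p, \<tau>). max_corr dA' dB' \<tau>) (map (\<lambda>(p,\<tau>). (p, tensor_map dA dB dA' dB' \<Phi> \<Psi> \<tau>)) D)) \<noteq> {}"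
    using assms(1) unfolding decomposition_def by simp
  fix y assume "y \<in> set (map (\<lambda>(p, \<tau>). max_corr dA' dB' \<tau>) (map (\<lambda>(p,\<tau>). (p, tensor_map dA dB dA' dB' \<Phi> \<Psi> \<tau>)) D))"
  then obtain p \<tau> where "(p, \<tau>) \<in> set D" and y: "y = max_corr dA' dB' (tensor_map dA dB dA' dB' \<Phi> \<Psi> \<tau>)"
    by auto
  then have "y \<le> max_corr dA dB \<tau>"
    using max_corr_tensor_map_le[OF _ assms(2,3)] assms(1) unfolding decomposition_def by auto
  also have "\<dots> \<le> Max (set (map (\<lambda>(p, \<tau>). max_corr dA dB \<tau>) D))"
    using \<open>(p, \<tau>) \<in> set D\<close> by (intro Max_ge) force+
  finally show "y \<le> Max (set (map (\<lambda>(p, \<tau>). max_corr dA dB \<tau>) D))" .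
qed simp

theorem theorem4:
  fixes dA dB dA' dB' :: nat
    and \<rho> :: "complex mat"
    and \<Phi> \<Psi> :: "complex mat \<Rightarrow> complex mat"
  assumes "density (dA * dB) \<rho>"
    and "cptp dA dA' \<Phi>"
    and "cptp dB dB' \<Psi>"
  shows "max_ent dA dB \<rho> \<ge> max_ent dA' dB' (tensor_map dA dB dA' dB' \<Phi> \<Psi> \<rho>)"
  unfolding max_ent_def
proof (rule cInf_mono)
  have "decomposition dA dB \<rho> [(1, \<rho>)]"
    using assms(1) density_carrier[OF assms(1)] unfolding decomposition_def by (auto intro!: eq_matI)
  then show "{Max (set (map (\<lambda>(p, \<tau>). max_corr dA dB \<tau>) D)) | D. decomposition dA dB \<rho> D} \<noteq> {}"
    by blast
  show "bdd_below {Max (set (map (\<lambda>(p, \<tau>). max_corr dA' dB' \<tau>) D)) | D.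
      decomposition dA' dB' (tensor_map dA dB dA' dB' \<Phi> \<Psi> \<rho>) D}"
    using max_corr_list_nonneg by (intro bdd_belowI[of _ 0]) blast
  fix m assume "m \<in> {Max (set (map (\<lambda>(p, \<tau>). max_corr dA dB \<tau>) D)) | D. decomposition dA dB \<rho> D}"
  then obtain D where D: "decomposition dA dB \<rho> D" and m: "m = Max (set (map (\<lambda>(p, \<tau>). max_corr dA dB \<tau>) D))"
    by blast
  then show "\<exists>a\<in>{Max (set (map (\<lambda>(p, \<tau>). max_corr dA' dB' \<tau>) D)) | D.
      decomposition dA' dB' (tensor_map dA dB dA' dB' \<Phi> \<Psi> \<rho>) D}. a \<le> m"
    using decomposition_tensor_map[OF D assms(2,3)] Max_max_corr_tensor_map_le[OF D assms(2,3)] by blast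
qed

end
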